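(* Let $T$ be a complete first-order theory in a countable language with an uncountable atomic model. Suppose $\alpha(\mathbf z,\mathbf x_1,\dots,\mathbf x_n)$ is $(n+1)$-striated and $\beta(\mathbf z,\mathbf y_1,\dots,\mathbf y_m)$ is $(m+1)$-striated (with the displayed partitions, the tuples of variables $\mathbf x_i,\mathbf y_j$ pairwise disjoint and disjoint from $\mathbf z$), and $\alpha\restriction_{\mathbf z}$ is equivalent to $\beta\restriction_{\mathbf z}$. Then there is a striated formula $\psi(\mathbf z,\mathbf x_1,\dots,\mathbf x_n,\mathbf y_1,\dots,\mathbf y_m)$ (with this partition) such that $\psi\vdash\alpha(\mathbf z,\mathbf x_1,\dots,\mathbf x_n)\wedge\beta(\mathbf z,\mathbf y_1,\dots,\mathbf y_m)$.
   Context: A complete formula is one isolating a complete type over $\emptyset$ realized in an atomic model. For a complete $\theta(\mathbf w)$ and a subsequence $\mathbf v$ of $\mathbf w$, $\theta\restriction_{\mathbf v}$ is the complete formula equivalent to $\exists\mathbf u\,\theta$, $\mathbf u$ the remaining variables. A complete formula $\theta(\mathbf z;\mathbf x)$ with a partition of its variables is extendible if there are countable atomic models $M\preceq N$ and tuples $\mathbf b\subseteq M$, $\mathbf a\subseteq N\setminus M$ with $N\models\theta(\mathbf b,\mathbf a)$. An $n$-striated formula is a complete formula $\theta(\mathbf y_0,\dots,\mathbf y_{n-1})$ with free variables partitioned into $n$ blocks such that for every $0<i<n$, with $\mathbf z=(\mathbf y_0,\dots,\mathbf y_{i-1})$ and $\mathbf x=(\mathbf y_i,\dots,\mathbf y_{n-1})$,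 $\theta(\mathbf z;\mathbf x)$ is extendible. (Equivalently, there are countable atomic models $M_0\preceq M_1\preceq\dots\preceq M_{n-1}$ and tuples $\mathbf a_0\subseteq M_0$, $\mathbf a_i\subseteq M_i\setminus M_{i-1}$ for $0<i<n$, with $M_{n-1}\models\theta(\mathbf a_0,\dots,\mathbf a_{n-1})$.) A striated formula is an $n$-striated formula for some $n$. *)

theory Defs
  imports Main "HOL-Library.Countable" "HOL-Library.Countable_Set"
begin

datatype 'f trm = Var nat | Fn 'f "'f trm list"

datatype ('f, 'r) fm =
    Eq "'f trm" "'f trm"
  | Rel 'r "'f trm list"
  | Neg "('f, 'r) fm"
  | Conj "('f, 'r) fm" "('f, 'r) fm"
  | Ex nat "('f, 'r) fm"

definition Imp :: "('f,'r) fm \<Rightarrow> ('f,'r) fm \<Rightarrow> ('f,'r) fm" where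
  "Imp a b = Neg (Conj a (Neg b))"

definition Iff :: "('f,'r) fm \<Rightarrow> ('f,'r) fm \<Rightarrow> ('f,'r) fm" where
  "Iff a b = Conj (Imp a b) (Imp b a)"

definition Exs :: "nat list \<Rightarrow> ('f,'r) fm \<Rightarrow> ('f,'r) fm" where
  "Exs us \<phi> = foldr Ex us \<phi>"

text \<open>A language: arities of the symbols. Countability of the language is imposed
  via the sort constraint countable on 'f and 'r in the theorem.\<close>
record ('f, 'r) lang =
  farity :: "'f \<Rightarrow> nat"
  rarity :: "'r \<Rightarrow> nat"

fun wf_trm :: "('f,'r) lang \<Rightarrow> 'f trm \<Rightarrow> bool" where
  "wf_trm L (Var n) = True"
| "wf_trm L (Fn f ts) = (length ts = farity L f \<and> (\<forall>t\<in>set ts. wf_trm L t))"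

fun wf_fm :: "('f,'r) lang \<Rightarrow> ('f,'r) fm \<Rightarrow> bool" where
  "wf_fm L (Eq s t) = (wf_trm L s \<and> wf_trm L t)"
| "wf_fm L (Rel r ts) = (length ts = rarity L r \<and> (\<forall>t\<in>set ts. wf_trm L t))"
| "wf_fm L (Neg \<phi>) = wf_fm L \<phi>"
| "wf_fm L (Conj \<phi> \<psi>) = (wf_fm L \<phi> \<and> wf_fm L \<psi>)"
| "wf_fm L (Ex x \<phi>) = wf_fm L \<phi>"

fun tvars :: "'f trm \<Rightarrow> nat set" where
  "tvars (Var n) = {n}"
| "tvars (Fn f ts) = (\<Union>t\<in>set ts. tvars t)"

fun freevars :: "('f,'r) fm \<Rightarrow> nat set" where
  "freevars (Eq s t) = tvars s \<union> tvars t"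
| "freevars (Rel r ts) = (\<Union>t\<in>set ts. tvars t)"
| "freevars (Neg \<phi>) = freevars \<phi>"
| "freevars (Conj \<phi> \<psi>) = freevars \<phi> \<union> freevars \<psi>"
| "freevars (Ex x \<phi>) = freevars \<phi> - {x}"

definition sentence :: "('f,'r) lang \<Rightarrow> ('f,'r) fm \<Rightarrow> bool" where
  "sentence L \<phi> \<longleftrightarrow> wf_fm L \<phi> \<and> freevars \<phi> = {}"

record ('a, 'f, 'r) strc =
  dom :: "'a set"
  fint :: "'f \<Rightarrow> 'a list \<Rightarrow> 'a"
  rint :: "'r \<Rightarrow> 'a list \<Rightarrow> bool"

definition is_struct :: "('f,'r) lang \<Rightarrow> ('a,'f,'r) strc \<Rightarrow> bool" where
  "is_struct L M \<longleftrightarrow> dom M \<noteq> {} \<and>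
     (\<forall>f as. length as = farity L f \<and> set as \<subseteq> dom M \<longrightarrow> fint M f as \<in> dom M)"

fun eval :: "('a,'f,'r) strc \<Rightarrow> (nat \<Rightarrow> 'a) \<Rightarrow> 'f trm \<Rightarrow> 'a" where
  "eval M e (Var n) = e n"
| "eval M e (Fn f ts) = fint M f (map (eval M e) ts)"

fun sat :: "('a,'f,'r) strc \<Rightarrow> (nat \<Rightarrow> 'a) \<Rightarrow> ('f,'r) fm \<Rightarrow> bool" where
  "sat M e (Eq s t) = (eval M e s = eval M e t)"
| "sat M e (Rel r ts) = rint M r (map (eval M e) ts)"
| "sat M e (Neg \<phi>) = (\<not> sat M e \<phi>)"
| "sat M e (Conj \<phi> \<psi>) = (sat M e \<phi> \<and> sat M e \<psi>)"
| "sat M e (Ex x \<phi>) = (\<exists>a\<in>dom M. sat M (e(x := a)) \<phi>)"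

definition satt :: "('a,'f,'r) strc \<Rightarrow> ('f,'r) fm \<Rightarrow> nat list \<Rightarrow> 'a list \<Rightarrow> bool" where
  "satt M \<theta> w as \<longleftrightarrow> length as = length w \<and> set as \<subseteq> dom M \<and>
     (\<forall>e. range e \<subseteq> dom M \<and> (\<forall>i<length w. e (w ! i) = as ! i) \<longrightarrow> sat M e \<theta>)"

definition models :: "('f,'r) lang \<Rightarrow> ('f,'r) fm set \<Rightarrow> ('a,'f,'r) strc \<Rightarrow> bool" where
  "models L T M \<longleftrightarrow> is_struct L M \<and>
     (\<forall>\<phi>\<in>T. \<forall>e. range e \<subseteq> dom M \<longrightarrow> sat M e \<phi>)"

text \<open>Since the language is countable,
  by Loewenheim--Skolem it suffices to test models with carrier contained in nat,
  i.e. (up to isomorphism) all countable models.\<close>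
definition entails :: "('f,'r) lang \<Rightarrow> ('f,'r) fm set \<Rightarrow> ('f,'r) fm \<Rightarrow> bool" where
  "entails L T \<phi> \<longleftrightarrow>
     (\<forall>M :: (nat,'f,'r) strc. models L T M \<longrightarrow> (\<forall>e. range e \<subseteq> dom M \<longrightarrow> sat M e \<phi>))"

definition complete_theory :: "('f,'r) lang \<Rightarrow> ('f,'r) fm set \<Rightarrow> bool" where
  "complete_theory L T \<longleftrightarrow> (\<forall>\<phi>\<in>T. sentence L \<phi>) \<and>
     (\<exists>M :: (nat,'f,'r) strc. models L T M) \<and>
     (\<forall>\<phi>. sentence L \<phi> \<longrightarrow> entails L T \<phi> \<or> entails L T (Neg \<phi>))"

definition elem_sub :: "('f,'r) lang \<Rightarrow> ('a,'f,'r) strc \<Rightarrow> ('a,'f,'r) strc \<Rightarrow> bool" where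
  "elem_sub L M N \<longleftrightarrow> is_struct L M \<and> is_struct L N \<and> dom M \<subseteq> dom N \<and>
     (\<forall>\<phi> e. wf_fm L \<phi> \<and> range e \<subseteq> dom M \<longrightarrow> (sat M e \<phi> \<longleftrightarrow> sat N e \<phi>))"

definition fm_in :: "('f,'r) lang \<Rightarrow> nat list \<Rightarrow> ('f,'r) fm \<Rightarrow> bool" where
  "fm_in L w \<phi> \<longleftrightarrow> wf_fm L \<phi> \<and> freevars \<phi> \<subseteq> set w"

definition complete_type :: "('f,'r) lang \<Rightarrow> ('f,'r) fm set \<Rightarrow> nat list \<Rightarrow> ('f,'r) fm set \<Rightarrow> bool" where
  "complete_type L T w p \<longleftrightarrow> distinct w \<and> (\<forall>\<phi>\<in>p. fm_in L w \<phi>) \<and>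
     (\<exists>M :: (nat,'f,'r) strc. \<exists>as. models L T M \<and> (\<forall>\<phi>\<in>p. satt M \<phi> w as)) \<and>
     (\<forall>\<phi>. fm_in L w \<phi> \<longrightarrow> \<phi> \<in> p \<or> Neg \<phi> \<in> p)"

definition isolates :: "('f,'r) lang \<Rightarrow> ('f,'r) fm set \<Rightarrow> nat list \<Rightarrow> ('f,'r) fm \<Rightarrow> ('f,'r) fm set \<Rightarrow> bool" where
  "isolates L T w \<theta> p \<longleftrightarrow> fm_in L w \<theta> \<and>
     (\<exists>M :: (nat,'f,'r) strc. \<exists>as. models L T M \<and> satt M \<theta> w as) \<and>
     (\<forall>\<phi>\<in>p. entails L T (Imp \<theta> \<phi>))"

definition realizes :: "('a,'f,'r) strc \<Rightarrow> nat list \<Rightarrow> ('f,'r) fm set \<Rightarrow> bool" where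
  "realizes M w p \<longleftrightarrow> (\<exists>as. length as = length w \<and> set as \<subseteq> dom M \<and> (\<forall>\<phi>\<in>p. satt M \<phi> w as))"

definition atomic_model :: "('f,'r) lang \<Rightarrow> ('f,'r) fm set \<Rightarrow> ('a,'f,'r) strc \<Rightarrow> bool" where
  "atomic_model L T M \<longleftrightarrow> models L T M \<and>
     (\<forall>w as. distinct w \<and> length as = length w \<and> set as \<subseteq> dom M \<longrightarrow>
        (\<exists>\<theta>. fm_in L w \<theta> \<and> satt M \<theta> w as \<and>
             (\<forall>\<phi>. fm_in L w \<phi> \<and> satt M \<phi> w as \<longrightarrow> entails L T (Imp \<theta> \<phi>))))"

text \<open>Complete formula theta(w): isolates a complete type realized in an atomic model
  (a countable one, carrier in nat; every isolated type is realized in every atomic model).\<close>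
definition complete_formula :: "('f,'r) lang \<Rightarrow> ('f,'r) fm set \<Rightarrow> nat list \<Rightarrow> ('f,'r) fm \<Rightarrow> bool" where
  "complete_formula L T w \<theta> \<longleftrightarrow>
     (\<exists>p. complete_type L T w p \<and> isolates L T w \<theta> p \<and>
          (\<exists>M :: (nat,'f,'r) strc. atomic_model L T M \<and> realizes M w p))"

definition extendible :: "('f,'r) lang \<Rightarrow> ('f,'r) fm set \<Rightarrow> ('f,'r) fm \<Rightarrow> nat list \<Rightarrow> nat list \<Rightarrow> bool" where
  "extendible L T \<theta> z x \<longleftrightarrow> complete_formula L T (z @ x) \<theta> \<and>
     (\<exists>(M :: (nat,'f,'r) strc) N bs as. atomic_model L T M \<and> atomic_model L T N \<and> elem_sub L M N \<and>
        length bs = length z \<and> length as = length x \<and>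
        set bs \<subseteq> dom M \<and> set as \<subseteq> dom N - dom M \<and> satt N \<theta> (z @ x) (bs @ as))"

text \<open>theta is striated with respect to the partition of its variables into the blocks ys
  (length ys = n gives an n-striated formula).\<close>
definition striated :: "('f,'r) lang \<Rightarrow> ('f,'r) fm set \<Rightarrow> ('f,'r) fm \<Rightarrow> nat list list \<Rightarrow> bool" where
  "striated L T \<theta> ys \<longleftrightarrow> complete_formula L T (concat ys) \<theta> \<and>
     (\<forall>i. 0 < i \<and> i < length ys \<longrightarrow>
        extendible L T \<theta> (concat (take i ys)) (concat (drop i ys)))"

end

theory Submission
  imports Defs
begin

text \<open>By homogeneity of countable atomic models (back and forth), a striated formula can be
  realized along a single chain \<open>M\<^sub>0 \<preceq> \<dots> \<preceq> M\<^sub>n\<^sub>-\<^sub>1\<close> of countable atomic models with the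
  \<open>i\<close>-th block of the tuple new in \<open>M\<^sub>i\<close>; conversely such a realization of a complete formula
  witnesses that it is striated. Take such chains for \<open>\<alpha>\<close> and for \<open>\<beta>\<close>. Since \<open>\<alpha>\<restriction>\<^sub>z\<close> and
  \<open>\<beta>\<restriction>\<^sub>z\<close> are equivalent and \<open>\<beta>\<close> is complete, the \<open>z\<close>-part of the \<open>\<alpha>\<close>-chain has the same type
  in its top model as the \<open>z\<close>-part of the \<open>\<beta>\<close>-chain in its bottom model, so an isomorphism
  carries the top of the \<open>\<alpha>\<close>-chain onto the bottom of the \<open>\<beta>\<close>-chain. Stacking the transported
  \<open>\<alpha>\<close>-chain below the \<open>\<beta>\<close>-chain realizes \<open>\<alpha> \<and> \<beta>\<close> with blocks \<open>z, x\<^sub>1, \<dots>, x\<^sub>n, y\<^sub>1, \<dots>, y\<^sub>m\<close>,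
  and the formula isolating the type of the whole tuple in the top model is the required
  \<open>\<psi>\<close>.\<close>

section \<open>Satisfaction by tuples\<close>

lemma sat_Imp [simp]: "sat M e (Imp \<phi> \<psi>) \<longleftrightarrow> (sat M e \<phi> \<longrightarrow> sat M e \<psi>)"
  by (simp add: Imp_def)

lemma sat_Iff [simp]: "sat M e (Iff \<phi> \<psi>) \<longleftrightarrow> (sat M e \<phi> \<longleftrightarrow> sat M e \<psi>)"
  by (auto simp: Iff_def)

lemma Exs_Nil [simp]: "Exs [] \<phi> = \<phi>"
  by (simp add: Exs_def)

lemma Exs_Cons [simp]: "Exs (v # vs) \<phi> = Ex v (Exs vs \<phi>)"
  by (simp add: Exs_def)

lemma freevars_Exs [simp]: "freevars (Exs vs \<phi>) = freevars \<phi> - set vs"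
  by (induct vs) auto

lemma eval_cong: "(\<And>v. v \<in> tvars t \<Longrightarrow> e v = e' v) \<Longrightarrow> eval M e t = eval M e' t"
proof (induct t)
  case (Fn f ts)
  then have "map (eval M e) ts = map (eval M e') ts"
    by auto
  then show ?case
    by (simp only: eval.simps)
qed simp

lemma sat_cong: "(\<And>v. v \<in> freevars \<phi> \<Longrightarrow> e v = e' v) \<Longrightarrow> sat M e \<phi> = sat M e' \<phi>"
proof (induct \<phi> arbitrary: e e')
  case (Eq s t)
  then show ?case
    using eval_cong[of s e e' M] eval_cong[of t e e' M] by simp
next
  case (Rel r ts)
  then have "map (eval M e) ts = map (eval M e') ts"
    by (auto intro: eval_cong)
  then show ?case
    by (simp only: sat.simps)
next
  case (Neg \<phi>)
  then show ?case
    by (metis freevars.simps(3) sat.simps(3))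
next
  case (Conj \<phi> \<psi>)
  then show ?case
    by (metis UnCI freevars.simps(4) sat.simps(4))
next
  case (Ex x \<phi>)
  then have "sat M (e(x := a)) \<phi> = sat M (e'(x := a)) \<phi>" for a
    by (intro Ex.hyps) auto
  then show ?case by simp
qed

definition matches :: "(nat \<Rightarrow> 'a) \<Rightarrow> nat list \<Rightarrow> 'a list \<Rightarrow> bool" where
  "matches e w as \<longleftrightarrow> (\<forall>i<length w. e (w ! i) = as ! i)"

lemma satt_iff_matches:
  "satt M \<phi> w as \<longleftrightarrow> length as = length w \<and> set as \<subseteq> dom M \<and>
     (\<forall>e. range e \<subseteq> dom M \<and> matches e w as \<longrightarrow> sat M e \<phi>)"
  unfolding satt_def matches_def by auto

lemma matching_env_exists:
  assumes "distinct w" "length as = length w" "set as \<subseteq> D" "D \<noteq> {}"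
  obtains e where "range e \<subseteq> D" "matches e w as"
proof -
  obtain d where "d \<in> D"
    using assms(4) by blast
  define e where "e v = (case map_of (zip w as) v of Some a \<Rightarrow> a | None \<Rightarrow> d)" for v
  have "range e \<subseteq> D"
    using \<open>d \<in> D\<close> assms(3)
    by (auto simp: e_def split: option.splits dest!: map_of_SomeD set_zip_rightD)
  moreover have "matches e w as"
    using assms(1,2) by (simp add: matches_def e_def map_of_zip_nth)
  ultimately show ?thesis
    by (rule that)
qed

lemma satt_iff_sat:
  assumes "length as = length w" "set as \<subseteq> dom M" "freevars \<phi> \<subseteq> set w"
    and "range e \<subseteq> dom M" "matches e w as"
  shows "satt M \<phi> w as \<longleftrightarrow> sat M e \<phi>"
proof
  assume "sat M e \<phi>"
  have "sat M e' \<phi>" if "matches e' w as" for e'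
  proof -
    have "e v = e' v" if "v \<in> set w" for v
      using that assms(5) \<open>matches e' w as\<close> by (auto simp: matches_def in_set_conv_nth)
    then show ?thesis
      using \<open>sat M e \<phi>\<close> assms(3) sat_cong[of \<phi> e e' M] by blast
  qed
  then show "satt M \<phi> w as"
    using assms(1,2) by (simp add: satt_iff_matches)
qed (use assms in \<open>simp add: satt_iff_matches\<close>)

lemma satt_Neg:
  assumes "distinct w" "length as = length w" "set as \<subseteq> dom M" "dom M \<noteq> {}"
    and "freevars \<phi> \<subseteq> set w"
  shows "satt M (Neg \<phi>) w as \<longleftrightarrow> \<not> satt M \<phi> w as"
proof -
  obtain e where "range e \<subseteq> dom M" "matches e w as"
    using matching_env_exists assms(1-4) by metis
  then show ?thesis
    using satt_iff_sat[OF assms(2,3)] assms(5) by simp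
qed

lemma satt_Conj: "satt M (Conj \<phi> \<psi>) w as \<longleftrightarrow> satt M \<phi> w as \<and> satt M \<psi> w as"
  by (auto simp: satt_iff_matches)

lemma satt_if_matches_imp:
  assumes "satt M \<phi> w' as'" "length as = length w" "set as \<subseteq> dom M"
    and "\<And>e. matches e w as \<Longrightarrow> matches e w' as'"
  shows "satt M \<phi> w as"
  using assms by (auto simp: satt_iff_matches)

lemma matches_append_left:
  "matches e (u @ x) (c @ ds) \<Longrightarrow> length c = length u \<Longrightarrow> matches e u c"
  unfolding matches_def by (metis nth_append trans_less_add1 length_append)

lemma matches_skip_middle:
  assumes "length a = length a'" "length b = length b'"
    and "matches e (a @ b @ c) (a' @ b' @ c')"
  shows "matches e (a @ c) (a' @ c')"
  unfolding matches_def
proof (intro allI impI)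
  fix i assume "i < length (a @ c)"
  show "e ((a @ c) ! i) = (a' @ c') ! i"
  proof (cases "i < length a")
    case True
    then show ?thesis
      using assms by (auto simp: matches_def nth_append dest!: spec[of _ i])
  next
    case False
    then obtain j where j: "i = length a + j"
      using le_Suc_ex not_less by blast
    have "length a + (length b + j) < length (a @ b @ c)"
      using \<open>i < length (a @ c)\<close> j by simp
    then have "e ((a @ b @ c) ! (length a + (length b + j))) = (a' @ b' @ c') ! (length a + (length b + j))"
      using assms(3) unfolding matches_def by blast
    then show ?thesis
      using j assms(1,2) by (metis nth_append_length_plus)
  qed
qed

lemma entails_satt:
  assumes "entails L T (Imp \<theta> \<phi>)" "models L T (M :: (nat,'f,'r) strc)" "satt M \<theta> w as"
  shows "satt M \<phi> w as"
  using assms by (auto simp: satt_iff_matches entails_def)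

lemma entails_Iff_Imp: "entails L T (Iff \<phi> \<psi>) \<Longrightarrow> entails L T (Imp \<phi> \<psi>)"
  by (simp add: entails_def)

fun upds :: "(nat \<Rightarrow> 'a) \<Rightarrow> nat list \<Rightarrow> 'a list \<Rightarrow> nat \<Rightarrow> 'a" where
  "upds e (v # vs) (d # ds) = upds (e(v := d)) vs ds"
| "upds e _ _ = e"

lemma sat_Exs:
  "sat M e (Exs vs \<phi>) \<longleftrightarrow>
     (\<exists>ds. length ds = length vs \<and> set ds \<subseteq> dom M \<and> sat M (upds e vs ds) \<phi>)"
proof (induct vs arbitrary: e)
  case (Cons v vs)
  show ?case
  proof
    assume "sat M e (Exs (v # vs) \<phi>)"
    then obtain d where "d \<in> dom M" "sat M (e(v := d)) (Exs vs \<phi>)"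
      by auto
    then obtain ds where "length ds = length vs" "set ds \<subseteq> dom M" "sat M (upds (e(v := d)) vs ds) \<phi>"
      using Cons by blast
    then show "\<exists>ds. length ds = length (v # vs) \<and> set ds \<subseteq> dom M \<and> sat M (upds e (v # vs) ds) \<phi>"
      using \<open>d \<in> dom M\<close> by (intro exI[of _ "d # ds"]) simp
  next
    assume "\<exists>ds. length ds = length (v # vs) \<and> set ds \<subseteq> dom M \<and> sat M (upds e (v # vs) ds) \<phi>"
    then obtain d ds where "length ds = length vs" "d \<in> dom M" "set ds \<subseteq> dom M"
      "sat M (upds (e(v := d)) vs ds) \<phi>"
      by (auto simp: length_Suc_conv)
    then have "sat M (e(v := d)) (Exs vs \<phi>)"
      using Cons by blast
    then show "sat M e (Exs (v # vs) \<phi>)"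
      using \<open>d \<in> dom M\<close> by (simp only: Exs_Cons sat.simps) blast
  qed
qed simp

lemma upds_notin: "v \<notin> set vs \<Longrightarrow> upds e vs ds v = e v"
  by (induct e vs ds rule: upds.induct) auto

lemma upds_nth:
  "distinct vs \<Longrightarrow> length ds = length vs \<Longrightarrow> i < length vs \<Longrightarrow> upds e vs ds (vs ! i) = ds ! i"
  by (induct e vs ds arbitrary: i rule: upds.induct) (auto simp: upds_notin nth_Cons split: nat.split)

lemma range_upds: "range e \<subseteq> D \<Longrightarrow> set ds \<subseteq> D \<Longrightarrow> range (upds e vs ds) \<subseteq> D"
  by (induct e vs ds rule: upds.induct) (auto simp: image_subset_iff)

lemma matches_upds:
  assumes "matches e u c" "distinct (u @ x)" "length ds = length x" "length c = length u"
  shows "matches (upds e x ds) (u @ x) (c @ ds)"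
  unfolding matches_def
proof (intro allI impI)
  fix i assume "i < length (u @ x)"
  show "upds e x ds ((u @ x) ! i) = (c @ ds) ! i"
  proof (cases "i < length u")
    case True
    then have "u ! i \<notin> set x"
      using assms(2) by (auto dest: nth_mem)
    then show ?thesis
      using True assms(1,4) by (simp add: nth_append upds_notin matches_def)
  qed (use \<open>i < length (u @ x)\<close> assms(2-4) in \<open>simp add: nth_append upds_nth\<close>)
qed

lemma satt_ExsD:
  assumes "satt M (Exs x \<phi>) u c" "distinct (u @ x)" "dom M \<noteq> {}" "freevars \<phi> \<subseteq> set (u @ x)"
  obtains ds where "length ds = length x" "set ds \<subseteq> dom M" "satt M \<phi> (u @ x) (c @ ds)"
proof -
  have lc: "length c = length u" and sc: "set c \<subseteq> dom M"
    using assms(1) by (auto simp: satt_iff_matches)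
  obtain e where e: "range e \<subseteq> dom M" "matches e u c"
    using matching_env_exists[of u c "dom M"] lc sc assms(2,3) by auto
  have "sat M e (Exs x \<phi>)"
    using assms(1) e by (simp add: satt_iff_matches)
  then obtain ds where ds: "length ds = length x" "set ds \<subseteq> dom M" "sat M (upds e x ds) \<phi>"
    by (auto simp: sat_Exs)
  have "satt M \<phi> (u @ x) (c @ ds)"
    using satt_iff_sat[of "c @ ds" "u @ x" M \<phi> "upds e x ds"] lc ds sc assms(4)
      matches_upds[OF e(2) assms(2) ds(1) lc] range_upds[OF e(1) ds(2)] by simp
  then show ?thesis
    using ds that by blast
qed

lemma satt_ExsI:
  assumes "satt M \<phi> (u @ x) (c @ ds)" "distinct (u @ x)" "length ds = length x" "length c = length u"
  shows "satt M (Exs x \<phi>) u c"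
proof -
  have sc: "set c \<subseteq> dom M" and sd: "set ds \<subseteq> dom M"
    using assms(1) by (auto simp: satt_iff_matches)
  have "sat M e (Exs x \<phi>)" if "range e \<subseteq> dom M" "matches e u c" for e
  proof -
    have "sat M (upds e x ds) \<phi>"
      using assms(1) range_upds[OF that(1) sd] matches_upds[OF that(2) assms(2,3,4)]
      by (simp add: satt_iff_matches)
    then show ?thesis
      using sd assms(3) by (auto simp: sat_Exs)
  qed
  then show ?thesis
    using sc assms(4) by (simp add: satt_iff_matches)
qed

lemma satt_append_iff:
  assumes "distinct (u @ x)" "length c = length u" "length ds = length x"
    and "set c \<subseteq> dom M" "set ds \<subseteq> dom M" "dom M \<noteq> {}" "freevars \<phi> \<subseteq> set u"
  shows "satt M \<phi> (u @ x) (c @ ds) \<longleftrightarrow> satt M \<phi> u c"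
proof -
  obtain e where e: "range e \<subseteq> dom M" "matches e (u @ x) (c @ ds)"
    using matching_env_exists[of "u @ x" "c @ ds" "dom M"] assms by auto
  then have "satt M \<phi> (u @ x) (c @ ds) \<longleftrightarrow> sat M e \<phi>"
    using satt_iff_sat[of "c @ ds" "u @ x" M \<phi> e] assms by auto
  also have "\<dots> \<longleftrightarrow> satt M \<phi> u c"
    using satt_iff_sat[of c u M \<phi> e] assms e matches_append_left[OF e(2) assms(2)] by auto
  finally show ?thesis .
qed

section \<open>Isomorphisms and elementary substructures\<close>

definition iso_on :: "('f,'r) lang \<Rightarrow> ('a \<Rightarrow> 'b) \<Rightarrow> ('a,'f,'r) strc \<Rightarrow> ('b,'f,'r) strc \<Rightarrow> bool" where
  "iso_on L h M N \<longleftrightarrow> inj_on h (dom M) \<and> h ` dom M = dom N \<and> is_struct L M \<and>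
    (\<forall>f as. length as = farity L f \<and> set as \<subseteq> dom M \<longrightarrow> h (fint M f as) = fint N f (map h as)) \<and>
    (\<forall>r as. length as = rarity L r \<and> set as \<subseteq> dom M \<longrightarrow> rint N r (map h as) = rint M r as)"

lemma range_inv_into_comp: "range e \<subseteq> h ` A \<Longrightarrow> range (inv_into A h \<circ> e) \<subseteq> A"
  by (auto simp: image_subset_iff inv_into_into)

lemma comp_inv_into_comp: "range e \<subseteq> h ` A \<Longrightarrow> h \<circ> (inv_into A h \<circ> e) = e"
  by (auto simp: image_subset_iff f_inv_into_f)

lemma map_f_inv_into:
  "set bs \<subseteq> h ` A \<Longrightarrow> bs = map h (map (inv_into A h) bs) \<and> set (map (inv_into A h) bs) \<subseteq> A"
  by (induct bs) (auto simp: f_inv_into_f inv_into_into)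

lemma iso_eval:
  assumes "iso_on L h M N" "range e \<subseteq> dom M"
  shows "wf_trm L t \<Longrightarrow> eval M e t \<in> dom M \<and> h (eval M e t) = eval N (h \<circ> e) t"
proof (induct t)
  case (Fn f ts)
  then have IH: "\<And>t. t \<in> set ts \<Longrightarrow> eval M e t \<in> dom M \<and> h (eval M e t) = eval N (h \<circ> e) t"
    and len: "length (map (eval M e) ts) = farity L f"
    by (auto simp: comp_def)
  then have s: "set (map (eval M e) ts) \<subseteq> dom M"
    and m: "map (eval N (h \<circ> e)) ts = map h (map (eval M e) ts)"
    by (auto simp: comp_def)
  have "fint M f (map (eval M e) ts) \<in> dom M"
    using assms(1) s len by (simp add: iso_on_def is_struct_def)
  moreover have "h (fint M f (map (eval M e) ts)) = fint N f (map h (map (eval M e) ts))"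
    using assms(1) s len by (simp add: iso_on_def)
  ultimately show ?case
    by (simp only: eval.simps m)
qed (use assms in auto)

lemma iso_sat:
  assumes "iso_on L h M N"
  shows "wf_fm L \<phi> \<Longrightarrow> range e \<subseteq> dom M \<Longrightarrow> sat N (h \<circ> e) \<phi> = sat M e \<phi>"
proof (induct \<phi> arbitrary: e)
  case (Eq s t)
  have inj: "inj_on h (dom M)"
    using assms by (simp add: iso_on_def)
  have m: "eval M e s \<in> dom M" "eval M e t \<in> dom M"
    and "eval N (h \<circ> e) s = h (eval M e s)" "eval N (h \<circ> e) t = h (eval M e t)"
    using iso_eval[OF assms Eq(2)] Eq(1) by auto
  then show ?case
    by (simp only: sat.simps inj_on_eq_iff[OF inj m])
next
  case (Rel r ts)
  have IH: "\<And>t. t \<in> set ts \<Longrightarrow> eval M e t \<in> dom M \<and> h (eval M e t) = eval N (h \<circ> e) t"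
    using iso_eval[OF assms Rel(2)] Rel(1) by auto
  then have s: "set (map (eval M e) ts) \<subseteq> dom M"
    and m: "map (eval N (h \<circ> e)) ts = map h (map (eval M e) ts)"
    by (auto simp: comp_def)
  moreover have "length (map (eval M e) ts) = rarity L r"
    using Rel(1) by simp
  ultimately have "rint N r (map h (map (eval M e) ts)) = rint M r (map (eval M e) ts)"
    using assms unfolding iso_on_def by blast
  then show ?case
    by (simp only: sat.simps m)
next
  case (Ex x \<phi>)
  have "sat N ((h \<circ> e)(x := h a)) \<phi> = sat M (e(x := a)) \<phi>" if "a \<in> dom M" for a
  proof -
    have eq: "(h \<circ> e)(x := h a) = h \<circ> (e(x := a))"
      by auto
    have "range (e(x := a)) \<subseteq> dom M" "wf_fm L \<phi>"
      using that Ex(2,3) by auto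
    then have "sat N (h \<circ> (e(x := a))) \<phi> = sat M (e(x := a)) \<phi>"
      by (intro Ex.hyps)
    then show ?thesis
      by (simp only: eq)
  qed
  moreover have "dom N = h ` dom M"
    using assms by (simp add: iso_on_def)
  then have "(\<exists>b\<in>dom N. sat N ((h \<circ> e)(x := b)) \<phi>) \<longleftrightarrow> (\<exists>a\<in>dom M. sat N ((h \<circ> e)(x := h a)) \<phi>)"
    by auto
  ultimately show ?case
    by (simp only: sat.simps) auto
qed simp_all

lemma iso_sat_inv:
  assumes "iso_on L h M N" "wf_fm L \<phi>" "range e \<subseteq> dom N"
  shows "sat N e \<phi> = sat M (inv_into (dom M) h \<circ> e) \<phi>"
proof -
  have "range e \<subseteq> h ` dom M"
    using assms(1,3) by (simp add: iso_on_def)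
  then show ?thesis
    using iso_sat[OF assms(1,2) range_inv_into_comp] comp_inv_into_comp by metis
qed

lemma iso_on_struct:
  assumes "iso_on L h M N"
  shows "is_struct L N"
proof -
  have st: "is_struct L M" and dN: "dom N = h ` dom M"
    using assms by (auto simp: iso_on_def)
  have "fint N f bs \<in> dom N" if bs: "length bs = farity L f" "set bs \<subseteq> dom N" for f bs
  proof -
    obtain as where as: "bs = map h as" "set as \<subseteq> dom M"
      using map_f_inv_into bs(2) dN by metis
    then have "h (fint M f as) = fint N f bs"
      using assms bs by (simp add: iso_on_def)
    moreover have "fint M f as \<in> dom M"
      using st as bs by (simp add: is_struct_def)
    ultimately show ?thesis
      using dN by (metis imageI)
  qed
  moreover have "dom N \<noteq> {}"
    using st dN by (simp add: is_struct_def)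
  ultimately show ?thesis
    by (simp add: is_struct_def)
qed

lemma iso_models:
  assumes "iso_on L h M N" "models L T M" "\<forall>\<phi>\<in>T. wf_fm L \<phi>"
  shows "models L T N"
proof -
  have "sat N e \<phi>" if "\<phi> \<in> T" "range e \<subseteq> dom N" for \<phi> e
  proof -
    have "range (inv_into (dom M) h \<circ> e) \<subseteq> dom M"
      using that(2) assms(1) range_inv_into_comp by (metis iso_on_def)
    then show ?thesis
      using iso_sat_inv[OF assms(1) _ that(2)] assms(2,3) that(1) by (simp add: models_def)
  qed
  then show ?thesis
    using iso_on_struct[OF assms(1)] by (simp add: models_def)
qed

lemma iso_satt:
  assumes "iso_on L h M N" "wf_fm L \<phi>" "length as = length w" "set as \<subseteq> dom M"
  shows "satt N \<phi> w (map h as) = satt M \<phi> w as"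
proof
  assume s: "satt N \<phi> w (map h as)"
  have "sat M e \<phi>" if "range e \<subseteq> dom M" "matches e w as" for e
  proof -
    have "range (h \<circ> e) \<subseteq> dom N" "matches (h \<circ> e) w (map h as)"
      using that assms(1,3) by (auto simp: matches_def iso_on_def)
    then show ?thesis
      using s iso_sat[OF assms(1,2) that(1)] by (simp add: satt_iff_matches)
  qed
  then show "satt M \<phi> w as"
    using assms(3,4) by (simp add: satt_iff_matches)
next
  assume s: "satt M \<phi> w as"
  have dN: "dom N = h ` dom M" and inj: "inj_on h (dom M)"
    using assms(1) by (auto simp: iso_on_def)
  have "sat N e \<phi>" if "range e \<subseteq> dom N" "matches e w (map h as)" for e
  proof -
    have "matches (inv_into (dom M) h \<circ> e) w as"
      using that(2) assms(3,4) inj by (auto simp: matches_def inv_into_f_f subset_code(1))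
    then show ?thesis
      using s iso_sat_inv[OF assms(1,2) that(1)] range_inv_into_comp[of e h "dom M"] that(1) dN
      by (simp add: satt_iff_matches)
  qed
  then show "satt N \<phi> w (map h as)"
    using assms(3,4) dN by (auto simp: satt_iff_matches)
qed

lemma iso_atomic:
  assumes "iso_on L h M N" "atomic_model L T M" "\<forall>\<phi>\<in>T. wf_fm L \<phi>"
  shows "atomic_model L T N"
  unfolding atomic_model_def
proof (intro conjI allI impI)
  show "models L T N"
    using iso_models assms by (auto simp: atomic_model_def)
  fix w :: "nat list" and bs
  assume w: "distinct w \<and> length bs = length w \<and> set bs \<subseteq> dom N"
  then obtain as where as: "bs = map h as" "set as \<subseteq> dom M" "length as = length w"
    using map_f_inv_into[of bs h "dom M"] assms(1) by (metis iso_on_def length_map)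
  then obtain \<theta> where \<theta>: "fm_in L w \<theta>" "satt M \<theta> w as"
    "\<forall>\<phi>. fm_in L w \<phi> \<and> satt M \<phi> w as \<longrightarrow> entails L T (Imp \<theta> \<phi>)"
    using assms(2) w unfolding atomic_model_def by blast
  have "satt N \<phi> w bs \<longleftrightarrow> satt M \<phi> w as" if "fm_in L w \<phi>" for \<phi>
    using iso_satt[OF assms(1) _ as(3,2)] that as(1) by (simp add: fm_in_def)
  then show "\<exists>\<theta>. fm_in L w \<theta> \<and> satt N \<theta> w bs \<and>
      (\<forall>\<phi>. fm_in L w \<phi> \<and> satt N \<phi> w bs \<longrightarrow> entails L T (Imp \<theta> \<phi>))"
    using \<theta> by blast
qed

definition strc_image :: "('a \<Rightarrow> 'b) \<Rightarrow> ('a,'f,'r) strc \<Rightarrow> ('b,'f,'r) strc" where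
  "strc_image g M = \<lparr>dom = g ` dom M,
     fint = (\<lambda>f bs. g (fint M f (map (inv_into (dom M) g) bs))),
     rint = (\<lambda>r bs. rint M r (map (inv_into (dom M) g) bs))\<rparr>"

lemma dom_strc_image [simp]: "dom (strc_image g M) = g ` dom M"
  by (simp add: strc_image_def)

lemma iso_on_strc_image:
  assumes "inj_on g (dom M)" "is_struct L M"
  shows "iso_on L g M (strc_image g M)"
proof -
  have "map (inv_into (dom M) g) (map g as) = as" if "set as \<subseteq> dom M" for as
    using that assms(1) by (induct as) (auto simp: inv_into_f_f)
  then show ?thesis
    using assms unfolding iso_on_def by (simp add: strc_image_def)
qed

lemma elem_sub_refl: "is_struct L M \<Longrightarrow> elem_sub L M M"
  by (simp add: elem_sub_def)

lemma elem_sub_trans: "elem_sub L M N \<Longrightarrow> elem_sub L N P \<Longrightarrow> elem_sub L M P"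
  unfolding elem_sub_def by (meson order_trans)

lemma elem_sub_dom: "elem_sub L M N \<Longrightarrow> dom M \<subseteq> dom N"
  by (simp add: elem_sub_def)

lemma elem_sub_strc_image:
  assumes "elem_sub L M N" "inj_on g (dom N)"
  shows "elem_sub L (strc_image g M) (strc_image g N)"
proof -
  have sM: "is_struct L M" and sN: "is_struct L N" and d: "dom M \<subseteq> dom N"
    using assms(1) by (auto simp: elem_sub_def)
  have isoM: "iso_on L g M (strc_image g M)"
    using iso_on_strc_image inj_on_subset[OF assms(2) d] sM by blast
  have isoN: "iso_on L g N (strc_image g N)"
    by (rule iso_on_strc_image[OF assms(2) sN])
  have "sat (strc_image g M) e \<phi> = sat (strc_image g N) e \<phi>"
    if "wf_fm L \<phi>" "range e \<subseteq> g ` dom M" for \<phi> e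
  proof -
    let ?e = "inv_into (dom M) g \<circ> e"
    have r: "range ?e \<subseteq> dom M"
      using that(2) by (rule range_inv_into_comp)
    have "sat (strc_image g M) (g \<circ> ?e) \<phi> = sat M ?e \<phi>"
      using iso_sat[OF isoM that(1) r] .
    also have "\<dots> = sat N ?e \<phi>"
      using assms(1) that(1) r by (simp add: elem_sub_def)
    also have "\<dots> = sat (strc_image g N) (g \<circ> ?e) \<phi>"
      using iso_sat[OF isoN that(1)] r d by auto
    finally show ?thesis
      using comp_inv_into_comp[OF that(2)] by simp
  qed
  then show ?thesis
    using iso_on_struct[OF isoM] iso_on_struct[OF isoN] d by (auto simp: elem_sub_def)
qed

text \<open>An isomorphic copy of \<open>M\<close> on the carrier of \<open>N\<close> may differ from \<open>N\<close> only outside the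
  carrier, so each is an elementary substructure of the other.\<close>
lemma strc_image_elem_sub:
  assumes "iso_on L g M N"
  shows "elem_sub L (strc_image g M) N" "elem_sub L N (strc_image g M)"
proof -
  have sM: "is_struct L M" and dN: "dom N = g ` dom M" and inj: "inj_on g (dom M)"
    using assms by (auto simp: iso_on_def)
  have isoM: "iso_on L g M (strc_image g M)"
    by (rule iso_on_strc_image[OF inj sM])
  have "sat (strc_image g M) e \<phi> = sat N e \<phi>" if "wf_fm L \<phi>" "range e \<subseteq> g ` dom M" for \<phi> e
    using iso_sat_inv[OF isoM that(1)] iso_sat_inv[OF assms that(1)] that(2) dN by simp
  then show "elem_sub L (strc_image g M) N" "elem_sub L N (strc_image g M)"
    using iso_on_struct[OF isoM] iso_on_struct[OF assms] dN by (auto simp: elem_sub_def)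
qed

section \<open>Types and complete formulas\<close>

lemma models_dom_ne: "models L T M \<Longrightarrow> dom M \<noteq> {}"
  by (simp add: models_def is_struct_def)

lemma atomic_model_models: "atomic_model L T M \<Longrightarrow> models L T M"
  by (simp add: atomic_model_def)

lemma atomic_model_struct: "atomic_model L T M \<Longrightarrow> is_struct L M"
  by (simp add: atomic_model_def models_def)

definition same_type ::
    "('f,'r) lang \<Rightarrow> nat list \<Rightarrow> ('a,'f,'r) strc \<Rightarrow> 'a list \<Rightarrow> ('b,'f,'r) strc \<Rightarrow> 'b list \<Rightarrow> bool" where
  "same_type L w M as N bs \<longleftrightarrow> (\<forall>\<phi>. fm_in L w \<phi> \<longrightarrow> (satt M \<phi> w as \<longleftrightarrow> satt N \<phi> w bs))"

lemma same_type_sym: "same_type L w M as N bs \<Longrightarrow> same_type L w N bs M as"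
  by (simp add: same_type_def)

lemma same_type_trans:
  "same_type L w M as N bs \<Longrightarrow> same_type L w N bs P cs \<Longrightarrow> same_type L w M as P cs"
  by (simp add: same_type_def)

lemma same_type_append:
  assumes "same_type L (u @ x) M (a1 @ a2) N (b1 @ b2)" "distinct (u @ x)"
    and "length a1 = length u" "length a2 = length x" "set (a1 @ a2) \<subseteq> dom M" "dom M \<noteq> {}"
    and "length b1 = length u" "length b2 = length x" "set (b1 @ b2) \<subseteq> dom N" "dom N \<noteq> {}"
  shows "same_type L u M a1 N b1"
  unfolding same_type_def
proof (intro allI impI)
  fix \<phi> assume \<phi>: "fm_in L u \<phi>"
  then have "fm_in L (u @ x) \<phi>"
    by (auto simp: fm_in_def)
  then show "satt M \<phi> u a1 \<longleftrightarrow> satt N \<phi> u b1"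
    using assms \<phi> satt_append_iff[of u x a1 a2 M \<phi>] satt_append_iff[of u x b1 b2 N \<phi>]
    by (auto simp: same_type_def fm_in_def)
qed

lemma elem_sub_same_type:
  assumes "elem_sub L M N" "distinct w" "length as = length w" "set as \<subseteq> dom M"
  shows "same_type L w M as N as"
  unfolding same_type_def
proof (intro allI impI)
  fix \<phi> assume "fm_in L w \<phi>"
  then have fv: "freevars \<phi> \<subseteq> set w" and wf: "wf_fm L \<phi>"
    by (auto simp: fm_in_def)
  have sM: "is_struct L M" and d: "dom M \<subseteq> dom N"
    using assms(1) by (auto simp: elem_sub_def)
  obtain e where e: "range e \<subseteq> dom M" "matches e w as"
    using matching_env_exists[OF assms(2,3,4)] sM by (auto simp: is_struct_def)
  have "satt M \<phi> w as \<longleftrightarrow> sat M e \<phi>"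
    using satt_iff_sat[OF assms(3,4) fv e] .
  also have "\<dots> \<longleftrightarrow> sat N e \<phi>"
    using assms(1) wf e by (simp add: elem_sub_def)
  also have "\<dots> \<longleftrightarrow> satt N \<phi> w as"
    using satt_iff_sat[OF assms(3) _ fv _ e(2)] assms(4) e(1) d by auto
  finally show "satt M \<phi> w as \<longleftrightarrow> satt N \<phi> w as" .
qed

lemma elem_sub_satt:
  assumes "elem_sub L M N" "fm_in L w \<phi>" "distinct w" "satt M \<phi> w as"
  shows "satt N \<phi> w as"
  using elem_sub_same_type[OF assms(1,3)] assms(2,4) by (auto simp: same_type_def satt_iff_matches)

lemma complete_formula_distinct: "complete_formula L T w \<theta> \<Longrightarrow> distinct w"
  by (auto simp: complete_formula_def complete_type_def)

lemma complete_formula_fm_in: "complete_formula L T w \<theta> \<Longrightarrow> fm_in L w \<theta>"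
  by (auto simp: complete_formula_def isolates_def)

lemma complete_formula_same_type:
  fixes M N :: "(nat,'f,'r) strc"
  assumes "complete_formula L T w \<theta>" "models L T M" "models L T N"
    and "satt M \<theta> w as" "satt N \<theta> w bs"
  shows "same_type L w M as N bs"
  unfolding same_type_def
proof (intro allI impI)
  fix \<phi> assume \<phi>: "fm_in L w \<phi>"
  obtain p where p: "complete_type L T w p" "isolates L T w \<theta> p"
    using assms(1) by (auto simp: complete_formula_def)
  have as: "length as = length w" "set as \<subseteq> dom M" and bs: "length bs = length w" "set bs \<subseteq> dom N"
    using assms(4,5) by (auto simp: satt_iff_matches)
  consider "entails L T (Imp \<theta> \<phi>)" | "entails L T (Imp \<theta> (Neg \<phi>))"
    using p \<phi> by (auto simp: complete_type_def isolates_def)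
  then show "satt M \<phi> w as \<longleftrightarrow> satt N \<phi> w bs"
  proof cases
    case 1
    then show ?thesis
      using entails_satt assms(2-5) by metis
  next
    case 2
    then have "satt M (Neg \<phi>) w as" "satt N (Neg \<phi>) w bs"
      using entails_satt assms(2-5) by metis+
    then show ?thesis
      using satt_Neg[OF _ as] satt_Neg[OF _ bs] \<phi> p(1) assms(2,3)
      by (auto simp: fm_in_def complete_type_def models_dom_ne)
  qed
qed

lemma complete_formula_realized:
  assumes "complete_formula L T w \<theta>"
  obtains M :: "(nat,'f,'r) strc" and as where "atomic_model L T M" "satt M \<theta> w as"
proof -
  obtain p where p: "complete_type L T w p" "isolates L T w \<theta> p"
    and "\<exists>M :: (nat,'f,'r) strc. atomic_model L T M \<and> realizes M w p"
    using assms by (auto simp: complete_formula_def)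
  then obtain M :: "(nat,'f,'r) strc" and as where M: "atomic_model L T M" "\<forall>\<phi>\<in>p. satt M \<phi> w as"
    by (auto simp: realizes_def)
  have "\<theta> \<in> p"
  proof (rule ccontr)
    assume "\<theta> \<notin> p"
    then have "Neg \<theta> \<in> p"
      using p(1) complete_formula_fm_in[OF assms] unfolding complete_type_def by blast
    then have "entails L T (Imp \<theta> (Neg \<theta>))"
      using p(2) by (simp add: isolates_def)
    moreover obtain M' :: "(nat,'f,'r) strc" and bs where M': "models L T M'" "satt M' \<theta> w bs"
      using p(2) by (auto simp: isolates_def)
    ultimately have "satt M' (Neg \<theta>) w bs"
      by (rule entails_satt)
    moreover have "length bs = length w" "set bs \<subseteq> dom M'"
      using M'(2) by (auto simp: satt_iff_matches)
    ultimately show False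
      using satt_Neg[of w bs M' \<theta>] M' complete_formula_fm_in[OF assms]
        complete_formula_distinct[OF assms] models_dom_ne[OF M'(1)] by (simp add: fm_in_def)
  qed
  then show ?thesis
    using M that by blast
qed

lemma atomic_model_isolating_formula:
  fixes M :: "(nat,'f,'r) strc"
  assumes "atomic_model L T M" "distinct w" "length as = length w" "set as \<subseteq> dom M"
  obtains \<psi> where "complete_formula L T w \<psi>" "satt M \<psi> w as"
    "\<And>\<phi>. fm_in L w \<phi> \<Longrightarrow> satt M \<phi> w as \<Longrightarrow> entails L T (Imp \<psi> \<phi>)"
proof -
  have mo: "models L T M"
    using assms(1) by (rule atomic_model_models)
  obtain \<psi> where \<psi>: "fm_in L w \<psi>" "satt M \<psi> w as"
    "\<forall>\<phi>. fm_in L w \<phi> \<and> satt M \<phi> w as \<longrightarrow> entails L T (Imp \<psi> \<phi>)"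
    using assms unfolding atomic_model_def by blast
  define p where "p = {\<phi>. fm_in L w \<phi> \<and> satt M \<phi> w as}"
  have "complete_type L T w p"
    unfolding complete_type_def
  proof (intro conjI allI impI)
    fix \<phi> assume "fm_in L w \<phi>"
    then show "\<phi> \<in> p \<or> Neg \<phi> \<in> p"
      using satt_Neg[OF assms(2,3,4) models_dom_ne[OF mo]] by (auto simp: p_def fm_in_def)
  qed (use assms(2) mo in \<open>auto simp: p_def\<close>)
  moreover have "isolates L T w \<psi> p"
    unfolding isolates_def using \<psi> mo by (auto simp: p_def)
  moreover have "realizes M w p"
    unfolding realizes_def using assms by (auto simp: p_def)
  ultimately have "complete_formula L T w \<psi>"
    unfolding complete_formula_def using assms(1) by blast
  then show ?thesis
    using \<psi> that by blast
qed

section \<open>Back and forth between countable atomic models\<close>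

definition fresh_vars :: "nat list \<Rightarrow> nat \<Rightarrow> nat list" where
  "fresh_vars w k = w @ map (\<lambda>i. Suc (Max (insert 0 (set w))) + i) [0..<k]"

lemma length_fresh_vars [simp]: "length (fresh_vars w k) = length w + k"
  by (simp add: fresh_vars_def)

lemma fresh_vars_0 [simp]: "fresh_vars w 0 = w"
  by (simp add: fresh_vars_def)

lemma fresh_vars_Suc: "fresh_vars w (Suc k) = fresh_vars w k @ [Suc (Max (insert 0 (set w))) + k]"
  by (simp add: fresh_vars_def)

lemma distinct_fresh_vars:
  assumes "distinct w"
  shows "distinct (fresh_vars w k)"
proof -
  have "x < Suc (Max (insert 0 (set w)))" if "x \<in> set w" for x
    using that by (simp add: le_imp_less_Suc)
  then show ?thesis
    using assms unfolding fresh_vars_def by (fastforce simp: distinct_map inj_on_def)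
qed

definition partial_iso ::
    "('f,'r) lang \<Rightarrow> ('a,'f,'r) strc \<Rightarrow> ('b,'f,'r) strc \<Rightarrow> nat list \<Rightarrow> nat \<Rightarrow> 'a list \<Rightarrow> 'b list \<Rightarrow> bool" where
  "partial_iso L M N w k A B \<longleftrightarrow> length A = length w + k \<and> length B = length w + k \<and>
     set A \<subseteq> dom M \<and> set B \<subseteq> dom N \<and> same_type L (fresh_vars w k) M A N B"

lemma partial_iso_sym: "partial_iso L M N w k A B \<Longrightarrow> partial_iso L N M w k B A"
  by (auto simp: partial_iso_def same_type_sym)

lemma partial_iso_forth:
  fixes M N :: "(nat,'f,'r) strc"
  assumes "atomic_model L T M" "models L T N" "distinct w"
    and "partial_iso L M N w k A B" "c \<in> dom M"
  shows "\<exists>d\<in>dom N. partial_iso L M N w (Suc k) (A @ [c]) (B @ [d])"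
proof -
  let ?u = "fresh_vars w k" and ?v = "Suc (Max (insert 0 (set w))) + k"
  have du: "distinct (?u @ [?v])"
    using distinct_fresh_vars[OF assms(3), of "Suc k"] by (simp add: fresh_vars_Suc)
  have A: "length A = length ?u" "set A \<subseteq> dom M" and B: "length B = length ?u" "set B \<subseteq> dom N"
    using assms(4) by (auto simp: partial_iso_def)
  have "length (A @ [c]) = length (?u @ [?v])" "set (A @ [c]) \<subseteq> dom M"
    using A assms(5) by auto
  then obtain \<theta> where \<theta>: "complete_formula L T (?u @ [?v]) \<theta>" "satt M \<theta> (?u @ [?v]) (A @ [c])"
    using atomic_model_isolating_formula[OF assms(1) du] by blast
  have "fm_in L ?u (Exs [?v] \<theta>)"
    using complete_formula_fm_in[OF \<theta>(1)] by (auto simp: fm_in_def)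
  moreover have "satt M (Exs [?v] \<theta>) ?u A"
    using satt_ExsI[OF \<theta>(2) du _ A(1)] by simp
  ultimately have "satt N (Exs [?v] \<theta>) ?u B"
    using assms(4) by (simp add: partial_iso_def same_type_def)
  moreover have "freevars \<theta> \<subseteq> set (?u @ [?v])"
    using complete_formula_fm_in[OF \<theta>(1)] by (simp add: fm_in_def)
  ultimately obtain ds where ds: "length ds = length [?v]" "set ds \<subseteq> dom N" "satt N \<theta> (?u @ [?v]) (B @ ds)"
    using satt_ExsD[OF _ du models_dom_ne[OF assms(2)]] by blast
  then obtain d where d: "ds = [d]" "d \<in> dom N"
    by (auto simp: length_Suc_conv)
  have "same_type L (?u @ [?v]) M (A @ [c]) N (B @ [d])"
    using complete_formula_same_type[OF \<theta>(1) atomic_model_models[OF assms(1)] assms(2) \<theta>(2)] ds d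
    by simp
  then show ?thesis
    using A B assms(5) d by (auto simp: partial_iso_def fresh_vars_Suc)
qed

lemma partial_iso_back:
  fixes M N :: "(nat,'f,'r) strc"
  assumes "models L T M" "atomic_model L T N" "distinct w"
    and "partial_iso L M N w k A B" "d \<in> dom N"
  shows "\<exists>c\<in>dom M. partial_iso L M N w (Suc k) (A @ [c]) (B @ [d])"
  using partial_iso_forth[OF assms(2,1,3) partial_iso_sym[OF assms(4)] assms(5)] partial_iso_sym
  by blast

locale back_and_forth =
  fixes L :: "('f,'r) lang" and T :: "('f,'r) fm set" and M N :: "(nat,'f,'r) strc"
    and w :: "nat list" and as bs :: "nat list"
  assumes atomic_M: "atomic_model L T M" and atomic_N: "atomic_model L T N"
    and distinct_w: "distinct w" and partial_iso_init: "partial_iso L M N w 0 as bs"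
begin

definition enum_M :: "nat \<Rightarrow> nat" where
  "enum_M i = (if i \<in> dom M then i else (SOME x. x \<in> dom M))"

definition enum_N :: "nat \<Rightarrow> nat" where
  "enum_N i = (if i \<in> dom N then i else (SOME x. x \<in> dom N))"

lemma enum_M_in_dom: "enum_M i \<in> dom M" and enum_N_in_dom: "enum_N i \<in> dom N"
  using models_dom_ne[OF atomic_model_models[OF atomic_M]]
    models_dom_ne[OF atomic_model_models[OF atomic_N]]
  by (auto simp: enum_M_def enum_N_def intro: someI_ex)

definition step_ok :: "nat \<Rightarrow> nat list \<times> nat list \<Rightarrow> nat list \<times> nat list \<Rightarrow> bool" where
  "step_ok k AB AB' \<longleftrightarrow> (\<exists>c d. AB' = (fst AB @ [c], snd AB @ [d]) \<and>
     partial_iso L M N w (Suc k) (fst AB') (snd AB') \<and>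
     (if even k then c = enum_M (k div 2) else d = enum_N (k div 2)))"

primrec seq :: "nat \<Rightarrow> nat list \<times> nat list" where
  "seq 0 = (as, bs)"
| "seq (Suc k) = (SOME AB. step_ok k (seq k) AB)"

declare seq.simps(2) [simp del]

lemma step_exists:
  assumes "partial_iso L M N w k A B"
  shows "\<exists>AB. step_ok k (A, B) AB"
proof (cases "even k")
  case True
  then show ?thesis
    using partial_iso_forth[OF atomic_M atomic_model_models[OF atomic_N] distinct_w assms enum_M_in_dom]
    by (auto simp: step_ok_def)
next
  case False
  then show ?thesis
    using partial_iso_back[OF atomic_model_models[OF atomic_M] atomic_N distinct_w assms enum_N_in_dom]
    by (auto simp: step_ok_def)
qed

lemma seq_step_ok_if_partial_iso:
  "partial_iso L M N w k (fst (seq k)) (snd (seq k)) \<Longrightarrow> step_ok k (seq k) (seq (Suc k))"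
  unfolding seq.simps(2) using step_exists[of k "fst (seq k)" "snd (seq k)"] by (simp add: someI_ex)

lemma seq_partial_iso: "partial_iso L M N w k (fst (seq k)) (snd (seq k))"
proof (induct k)
  case (Suc k)
  then show ?case
    using seq_step_ok_if_partial_iso[OF Suc] by (auto simp: step_ok_def)
qed (simp add: partial_iso_init)

lemma seq_step_ok: "step_ok k (seq k) (seq (Suc k))"
  by (rule seq_step_ok_if_partial_iso[OF seq_partial_iso])

lemma length_seq: "length (fst (seq k)) = length w + k" "length (snd (seq k)) = length w + k"
  using seq_partial_iso[of k] by (auto simp: partial_iso_def)

lemma seq_Suc: "\<exists>c d. seq (Suc k) = (fst (seq k) @ [c], snd (seq k) @ [d])"
  using seq_step_ok[of k] unfolding step_ok_def by blast

lemma take_seq: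
  assumes "k \<le> k'"
  shows "take (length w + k) (fst (seq k')) = fst (seq k) \<and> take (length w + k) (snd (seq k')) = snd (seq k)"
  using assms
proof (induct k' rule: dec_induct)
  case (step m)
  obtain c d where "seq (Suc m) = (fst (seq m) @ [c], snd (seq m) @ [d])"
    using seq_Suc[of m] by blast
  moreover have "length w + k \<le> length (fst (seq m))" "length w + k \<le> length (snd (seq m))"
    using step(1) length_seq[of m] by simp_all
  ultimately show ?case
    using step(3) by simp
qed (simp add: length_seq)

definition left :: "nat \<Rightarrow> nat" where
  "left i = fst (seq (Suc i)) ! i"

definition right :: "nat \<Rightarrow> nat" where
  "right i = snd (seq (Suc i)) ! i"

lemma seq_nth:
  assumes "i < length w + k"
  shows "fst (seq k) ! i = left i" "snd (seq k) ! i = right i"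
proof -
  have "fst (seq k) ! i = fst (seq (Suc i)) ! i \<and> snd (seq k) ! i = snd (seq (Suc i)) ! i"
  proof (cases "Suc i \<le> k")
    case True
    then have "i < length w + Suc i"
      by simp
    then show ?thesis
      using take_seq[OF True] nth_take by metis
  next
    case False
    then show ?thesis
      using take_seq[of k "Suc i"] assms nth_take by (metis nat_le_linear)
  qed
  then show "fst (seq k) ! i = left i" "snd (seq k) ! i = right i"
    by (simp_all add: left_def right_def)
qed

lemma seq_eq_map: "seq k = (map left [0..<length w + k], map right [0..<length w + k])"
proof (rule prod_eqI)
  show "fst (seq k) = fst (map left [0..<length w + k], map right [0..<length w + k])"
    by (rule nth_equalityI) (simp_all add: length_seq seq_nth)
  show "snd (seq k) = snd (map left [0..<length w + k], map right [0..<length w + k])"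
    by (rule nth_equalityI) (simp_all add: length_seq seq_nth)
qed

lemma partial_iso_left_right:
  "partial_iso L M N w n (map left [0..<length w + n]) (map right [0..<length w + n])"
  using seq_partial_iso[of n] by (simp add: seq_eq_map)

lemma left_in_dom: "left i \<in> dom M" and right_in_dom: "right i \<in> dom N"
proof -
  have "i \<in> set [0..<length w + Suc i]"
    by simp
  moreover have "set (map left [0..<length w + Suc i]) \<subseteq> dom M"
    and "set (map right [0..<length w + Suc i]) \<subseteq> dom N"
    using partial_iso_left_right[of "Suc i"] unfolding partial_iso_def by blast+
  ultimately show "left i \<in> dom M" "right i \<in> dom N"
    by (auto simp del: upt_Suc)
qed

lemma left_enum:
  assumes "x \<in> dom M"
  shows "left (length w + 2 * x) = x"
proof -
  have "even (2 * x)" "2 * x div 2 = x"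
    by simp_all
  then obtain c d where "seq (Suc (2 * x)) = (fst (seq (2 * x)) @ [c], snd (seq (2 * x)) @ [d])" "c = x"
    using seq_step_ok[of "2 * x"] assms unfolding step_ok_def enum_M_def by auto
  then have "fst (seq (Suc (2 * x))) ! (length w + 2 * x) = x"
    using length_seq(1)[of "2 * x"] by (simp add: nth_append)
  moreover have "fst (seq (Suc (2 * x))) = map left [0..<length w + Suc (2 * x)]"
    by (metis seq_eq_map fst_conv)
  ultimately show ?thesis
    by (simp del: upt_Suc)
qed

lemma right_enum:
  assumes "y \<in> dom N"
  shows "right (length w + Suc (2 * y)) = y"
proof -
  have "odd (Suc (2 * y))" "Suc (2 * y) div 2 = y"
    by simp_all
  then obtain c d where "seq (Suc (Suc (2 * y))) = (fst (seq (Suc (2 * y))) @ [c], snd (seq (Suc (2 * y))) @ [d])"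
    "d = y"
    using seq_step_ok[of "Suc (2 * y)"] assms unfolding step_ok_def enum_N_def by auto
  then have "snd (seq (Suc (Suc (2 * y)))) ! (length w + Suc (2 * y)) = y"
    using length_seq(2)[of "Suc (2 * y)"] by (simp add: nth_append)
  moreover have "snd (seq (Suc (Suc (2 * y)))) = map right [0..<length w + Suc (Suc (2 * y))]"
    by (metis seq_eq_map snd_conv)
  ultimately show ?thesis
    by (simp del: upt_Suc)
qed

lemma sat_transfer:
  assumes "fm_in L (fresh_vars w n) \<phi>"
  obtains eM eN where "\<And>i. i < length w + n \<Longrightarrow> eM (fresh_vars w n ! i) = left i"
    "\<And>i. i < length w + n \<Longrightarrow> eN (fresh_vars w n ! i) = right i"
    "sat M eM \<phi> \<longleftrightarrow> sat N eN \<phi>"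
proof -
  let ?u = "fresh_vars w n" and ?A = "map left [0..<length w + n]" and ?B = "map right [0..<length w + n]"
  have P: "partial_iso L M N w n ?A ?B"
    by (rule partial_iso_left_right)
  have du: "distinct ?u" and A: "length ?A = length ?u" "set ?A \<subseteq> dom M"
    and B: "length ?B = length ?u" "set ?B \<subseteq> dom N"
    using distinct_fresh_vars[OF distinct_w] P by (auto simp: partial_iso_def)
  obtain eM where eM: "range eM \<subseteq> dom M" "matches eM ?u ?A"
    using matching_env_exists[OF du A] models_dom_ne[OF atomic_model_models[OF atomic_M]] by blast
  obtain eN where eN: "range eN \<subseteq> dom N" "matches eN ?u ?B"
    using matching_env_exists[OF du B] models_dom_ne[OF atomic_model_models[OF atomic_N]] by blast
  have fv: "freevars \<phi> \<subseteq> set ?u"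
    using assms by (simp add: fm_in_def)
  have "sat M eM \<phi> \<longleftrightarrow> satt M \<phi> ?u ?A"
    using satt_iff_sat[OF A fv eM] by simp
  also have "\<dots> \<longleftrightarrow> satt N \<phi> ?u ?B"
    using P assms by (simp add: partial_iso_def same_type_def)
  also have "\<dots> \<longleftrightarrow> sat N eN \<phi>"
    using satt_iff_sat[OF B fv eN] by simp
  finally show ?thesis
    using eM(2) eN(2) by (intro that) (auto simp: matches_def)
qed

lemma left_eq_iff_right_eq: "left i = left j \<longleftrightarrow> right i = right j"
proof -
  let ?u = "fresh_vars w (Suc (i + j))"
  let ?\<phi> = "Eq (Var (?u ! i)) (Var (?u ! j)) :: ('f,'r) fm"
  have bound: "i < length w + Suc (i + j)" "j < length w + Suc (i + j)"
    by simp_all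
  have "fm_in L ?u ?\<phi>"
    by (simp add: fm_in_def)
  then obtain eM eN where "\<And>k. k < length w + Suc (i + j) \<Longrightarrow> eM (?u ! k) = left k"
    "\<And>k. k < length w + Suc (i + j) \<Longrightarrow> eN (?u ! k) = right k" "sat M eM ?\<phi> \<longleftrightarrow> sat N eN ?\<phi>"
    by (rule sat_transfer) blast
  then show ?thesis
    using bound by simp
qed

lemma fint_transfer:
  assumes "length is = farity L f"
  shows "fint M f (map left is) = left j \<longleftrightarrow> fint N f (map right is) = right j"
proof -
  let ?n = "Suc (j + sum_list is)"
  let ?u = "fresh_vars w ?n"
  have bound: "i < length w + ?n" if "i \<in> set is \<or> i = j" for i
    using that member_le_sum_list[of i "is"] by auto
  let ?\<phi> = "Eq (Fn f (map (\<lambda>i. Var (?u ! i)) is)) (Var (?u ! j)) :: ('f,'r) fm"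
  have "fm_in L ?u ?\<phi>"
    using bound assms by (auto simp: fm_in_def)
  then obtain eM eN where e: "\<And>i. i < length w + ?n \<Longrightarrow> eM (?u ! i) = left i"
    "\<And>i. i < length w + ?n \<Longrightarrow> eN (?u ! i) = right i" "sat M eM ?\<phi> \<longleftrightarrow> sat N eN ?\<phi>"
    by (rule sat_transfer) blast
  moreover have "map (eval M eM) (map (\<lambda>i. Var (?u ! i)) is) = map left is"
    and "map (eval N eN) (map (\<lambda>i. Var (?u ! i)) is) = map right is"
    using e(1,2) bound by auto
  ultimately show ?thesis
    using bound[of j] by (simp only: sat.simps eval.simps) simp
qed

lemma rint_transfer:
  assumes "length is = rarity L r"
  shows "rint M r (map left is) \<longleftrightarrow> rint N r (map right is)"
proof -
  let ?n = "Suc (sum_list is)"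
  let ?u = "fresh_vars w ?n"
  have bound: "i < length w + ?n" if "i \<in> set is" for i
    using that member_le_sum_list[of i "is"] by auto
  let ?\<phi> = "Rel r (map (\<lambda>i. Var (?u ! i)) is) :: ('f,'r) fm"
  have "fm_in L ?u ?\<phi>"
    using bound assms by (auto simp: fm_in_def)
  then obtain eM eN where e: "\<And>i. i < length w + ?n \<Longrightarrow> eM (?u ! i) = left i"
    "\<And>i. i < length w + ?n \<Longrightarrow> eN (?u ! i) = right i" "sat M eM ?\<phi> \<longleftrightarrow> sat N eN ?\<phi>"
    by (rule sat_transfer) blast
  moreover have "map (eval M eM) (map (\<lambda>i. Var (?u ! i)) is) = map left is"
    and "map (eval N eN) (map (\<lambda>i. Var (?u ! i)) is) = map right is"
    using e(1,2) bound by auto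
  ultimately show ?thesis
    by (simp only: sat.simps)
qed

text \<open>Every element \<open>x\<close> of \<open>M\<close> goes forth at step \<open>2 * x\<close>, to position \<open>length w + 2 * x\<close>.\<close>
definition iso :: "nat \<Rightarrow> nat" where
  "iso x = right (length w + 2 * x)"

lemma iso_left: "iso (left i) = right i"
  using left_enum[OF left_in_dom[of i]] left_eq_iff_right_eq by (simp add: iso_def)

lemma map_left_index:
  assumes "set xs \<subseteq> dom M"
  shows "map left (map (\<lambda>x. length w + 2 * x) xs) = xs"
  using assms by (induct xs) (auto simp: left_enum)

lemma map_iso: "map iso xs = map right (map (\<lambda>x. length w + 2 * x) xs)"
  by (simp add: iso_def)

lemma iso_fint:
  assumes "length xs = farity L f" "set xs \<subseteq> dom M"
  shows "iso (fint M f xs) = fint N f (map iso xs)"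
proof -
  let ?ix = "\<lambda>x. length w + 2 * x"
  have "fint M f xs \<in> dom M"
    using atomic_model_struct[OF atomic_M] assms by (simp add: is_struct_def)
  then have "fint M f (map left (map ?ix xs)) = left (?ix (fint M f xs))"
    unfolding map_left_index[OF assms(2)] using left_enum by simp
  moreover have "length (map ?ix xs) = farity L f"
    using assms(1) by simp
  ultimately have "fint N f (map right (map ?ix xs)) = right (?ix (fint M f xs))"
    by (metis fint_transfer)
  then show ?thesis
    unfolding map_iso by (simp add: iso_def)
qed

lemma iso_rint:
  assumes "length xs = rarity L r" "set xs \<subseteq> dom M"
  shows "rint N r (map iso xs) = rint M r xs"
proof -
  have "length (map (\<lambda>x. length w + 2 * x) xs) = rarity L r"
    using assms(1) by simp
  then show ?thesis
    using rint_transfer unfolding map_iso by (metis map_left_index[OF assms(2)])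
qed

lemma iso_on_iso: "iso_on L iso M N"
proof -
  have "inj_on iso (dom M)"
    by (rule inj_onI) (metis iso_def left_enum left_eq_iff_right_eq)
  moreover have "iso ` dom M = dom N"
  proof
    show "iso ` dom M \<subseteq> dom N"
      by (auto simp: iso_def right_in_dom)
    show "dom N \<subseteq> iso ` dom M"
      using right_enum iso_left left_in_dom by (metis image_eqI subsetI)
  qed
  ultimately show ?thesis
    using atomic_model_struct[OF atomic_M] iso_fint iso_rint by (simp add: iso_on_def)
qed

lemma map_iso_init: "map iso as = bs"
proof -
  have "map iso (map left [0..<length w]) = map right [0..<length w]"
    by (simp add: iso_left)
  moreover have "as = map left [0..<length w]" "bs = map right [0..<length w]"
    using seq_eq_map[of 0] by simp_all
  ultimately show ?thesis
    by metis
qed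

end

theorem atomic_models_iso:
  fixes M N :: "(nat,'f,'r) strc"
  assumes "atomic_model L T M" "atomic_model L T N" "distinct w"
    and "length as = length w" "length bs = length w" "set as \<subseteq> dom M" "set bs \<subseteq> dom N"
    and "same_type L w M as N bs"
  obtains h where "iso_on L h M N" "map h as = bs"
proof -
  interpret back_and_forth L T M N w as bs
    using assms by unfold_locales (simp_all add: partial_iso_def)
  show ?thesis
    using iso_on_iso map_iso_init that by blast
qed

section \<open>Striations\<close>

definition stratum_below ::
    "('f,'r) lang \<Rightarrow> ('a,'f,'r) strc \<times> 'a list \<Rightarrow> ('a,'f,'r) strc \<times> 'a list \<Rightarrow> bool" where
  "stratum_below L C D \<longleftrightarrow> elem_sub L (fst C) (fst D) \<and> set (snd D) \<inter> dom (fst C) = {}"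

text \<open>The witness of the equivalent description of striated formulas: atomic models
  \<open>M\<^sub>0 \<preceq> \<dots> \<preceq> M\<^sub>n\<^sub>-\<^sub>1\<close> with tuples \<open>a\<^sub>i \<subseteq> M\<^sub>i\<close> disjoint from all earlier \<open>M\<^sub>j\<close>.\<close>
definition striation :: "('f,'r) lang \<Rightarrow> ('f,'r) fm set \<Rightarrow> (('a,'f,'r) strc \<times> 'a list) list \<Rightarrow> bool" where
  "striation L T Cs \<longleftrightarrow> Cs \<noteq> [] \<and> (\<forall>C\<in>set Cs. atomic_model L T (fst C) \<and> set (snd C) \<subseteq> dom (fst C)) \<and>
     sorted_wrt (stratum_below L) Cs"

abbreviation top_model :: "(('a,'f,'r) strc \<times> 'a list) list \<Rightarrow> ('a,'f,'r) strc" where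
  "top_model Cs \<equiv> fst (last Cs)"

abbreviation strata_tuple :: "(('a,'f,'r) strc \<times> 'a list) list \<Rightarrow> 'a list" where
  "strata_tuple Cs \<equiv> concat (map snd Cs)"

lemma sorted_wrt_last: "sorted_wrt R xs \<Longrightarrow> x \<in> set xs \<Longrightarrow> x = last xs \<or> R x (last xs)"
proof (induct xs rule: rev_induct)
  case (snoc y xs)
  then show ?case
    by (auto simp: sorted_wrt_append)
qed simp

lemma striation_elem_sub_top:
  assumes "striation L T Cs" "C \<in> set Cs"
  shows "elem_sub L (fst C) (top_model Cs)"
  using sorted_wrt_last[of "stratum_below L" Cs C] assms atomic_model_struct elem_sub_refl
  by (fastforce simp: striation_def stratum_below_def)

lemma striation_atomic_top: "striation L T Cs \<Longrightarrow> atomic_model L T (top_model Cs)"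
  by (simp add: striation_def)

lemma striation_tuple_top:
  assumes "striation L T Cs"
  shows "set (strata_tuple Cs) \<subseteq> dom (top_model Cs)"
proof
  fix x assume "x \<in> set (strata_tuple Cs)"
  then obtain C where "C \<in> set Cs" "x \<in> set (snd C)"
    by auto
  then have "x \<in> dom (fst C)"
    using assms by (auto simp: striation_def)
  then show "x \<in> dom (top_model Cs)"
    using elem_sub_dom[OF striation_elem_sub_top[OF assms \<open>C \<in> set Cs\<close>]] by blast
qed

lemma striation_appendD:
  assumes "striation L T (Cs @ Ds)" "Cs \<noteq> []"
  shows "striation L T Cs" "\<And>C D. C \<in> set Cs \<Longrightarrow> D \<in> set Ds \<Longrightarrow> stratum_below L C D"
  using assms by (auto simp: striation_def sorted_wrt_append)

lemma striation_append:
  assumes "striation L T Cs" "striation L T (D # Ds)" "elem_sub L (top_model Cs) (fst D)"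
  shows "striation L T (Cs @ Ds)"
proof -
  have "stratum_below L C E" if "C \<in> set Cs" "E \<in> set Ds" for C E
  proof -
    have "elem_sub L (fst C) (fst D)"
      using striation_elem_sub_top[OF assms(1) that(1)] assms(3) elem_sub_trans by blast
    moreover have "stratum_below L D E"
      using assms(2) that(2) by (simp add: striation_def)
    ultimately show ?thesis
      using elem_sub_trans elem_sub_dom by (fastforce simp: stratum_below_def)
  qed
  then show ?thesis
    using assms(1,2) by (auto simp: striation_def sorted_wrt_append)
qed

lemma striation_shrink_last:
  assumes "striation L T (Cs @ [(M, a)])" "set a' \<subseteq> set a"
  shows "striation L T (Cs @ [(M, a')])"
  using assms unfolding striation_def sorted_wrt_append stratum_below_def by (simp, blast)

lemma striation_pair:
  assumes "atomic_model L T M" "atomic_model L T N" "elem_sub L M N" "set a \<subseteq> dom N - dom M"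
  shows "striation L T [(M, []), (N, a)]"
  using assms by (auto simp: striation_def stratum_below_def)

lemma striation_image:
  assumes "striation L T Cs" "inj_on g (dom (top_model Cs))" "\<forall>\<phi>\<in>T. wf_fm L \<phi>"
  shows "striation L T (map (map_prod (strc_image g) (map g)) Cs)"
proof -
  have sub: "dom (fst C) \<subseteq> dom (top_model Cs)" if "C \<in> set Cs" for C
    using elem_sub_dom[OF striation_elem_sub_top[OF assms(1) that]] .
  have "atomic_model L T (strc_image g (fst C)) \<and> g ` set (snd C) \<subseteq> g ` dom (fst C)"
    if "C \<in> set Cs" for C
  proof -
    have "atomic_model L T (fst C)" "set (snd C) \<subseteq> dom (fst C)"
      using assms(1) that by (auto simp: striation_def)
    then show ?thesis
      using iso_atomic[OF iso_on_strc_image[OF inj_on_subset[OF assms(2) sub[OF that]]] _ assms(3)]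
        atomic_model_struct by blast
  qed
  moreover have "stratum_below L (map_prod (strc_image g) (map g) C) (map_prod (strc_image g) (map g) D)"
    if "C \<in> set Cs" "D \<in> set Cs" "stratum_below L C D" for C D
  proof -
    have "set (snd D) \<subseteq> dom (fst D)"
      using assms(1) that(2) by (simp add: striation_def)
    then have "set (snd D) \<subseteq> dom (top_model Cs)"
      using sub[OF that(2)] by blast
    then have "g ` set (snd D) \<inter> g ` dom (fst C) = {}"
      using that(3) sub[OF that(1)] inj_on_image_Int[OF assms(2)]
      by (metis image_empty stratum_below_def)
    moreover have "elem_sub L (fst C) (fst D)"
      using that(3) by (simp add: stratum_below_def)
    then have "elem_sub L (strc_image g (fst C)) (strc_image g (fst D))"
      using elem_sub_strc_image inj_on_subset[OF assms(2) sub[OF that(2)]] by blast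
    ultimately show ?thesis
      by (simp add: stratum_below_def)
  qed
  then have "sorted_wrt (stratum_below L) (map (map_prod (strc_image g) (map g)) Cs)"
    using assms(1) unfolding striation_def sorted_wrt_map by (blast intro: sorted_wrt_mono_rel)
  ultimately show ?thesis
    using assms(1) by (auto simp: striation_def)
qed

section \<open>Realizing striated formulas along striations\<close>

abbreviation fits_blocks :: "(('a,'f,'r) strc \<times> 'a list) list \<Rightarrow> nat list list \<Rightarrow> bool" where
  "fits_blocks Cs Bs \<equiv> list_all2 (\<lambda>C B. length (snd C) = length B) Cs Bs"

definition striation_realizes ::
    "('f,'r) lang \<Rightarrow> ('f,'r) fm set \<Rightarrow> (('a,'f,'r) strc \<times> 'a list) list \<Rightarrow> ('f,'r) fm \<Rightarrow> nat list list \<Rightarrow> bool" where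
  "striation_realizes L T Cs \<theta> Bs \<longleftrightarrow> striation L T Cs \<and> fits_blocks Cs Bs \<and>
     satt (top_model Cs) \<theta> (concat Bs) (strata_tuple Cs)"

lemma length_strata_tuple:
  "fits_blocks Cs Bs \<Longrightarrow> length (strata_tuple Cs) = length (concat Bs)"
  by (induct rule: list_all2_induct) auto

lemma striated_if_striation_realizes:
  fixes Cs :: "((nat,'f,'r) strc \<times> nat list) list"
  assumes "striation_realizes L T Cs \<theta> Bs" "complete_formula L T (concat Bs) \<theta>"
  shows "striated L T \<theta> Bs"
  unfolding striated_def
proof (intro conjI allI impI)
  show "complete_formula L T (concat Bs) \<theta>"
    by fact
next
  fix i assume i: "0 < i \<and> i < length Bs"
  have st: "striation L T Cs" and lengths: "fits_blocks Cs Bs"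
    and sat: "satt (top_model Cs) \<theta> (concat Bs) (strata_tuple Cs)"
    using assms(1) by (auto simp: striation_realizes_def)
  let ?Cs1 = "take i Cs" and ?Cs2 = "drop i Cs"
  have ne: "?Cs1 \<noteq> []" "?Cs2 \<noteq> []"
    using i list_all2_lengthD[OF lengths] by auto
  have "striation L T (?Cs1 @ ?Cs2)"
    using st by (simp only: append_take_drop_id)
  note split = striation_appendD[OF this ne(1)]
  let ?M = "top_model ?Cs1"
  have "last ?Cs1 \<in> set Cs"
    using ne(1) by (meson last_in_set in_set_takeD)
  then have M: "atomic_model L T ?M" "elem_sub L ?M (top_model Cs)"
    using st striation_elem_sub_top[OF st] by (auto simp: striation_def)
  have "set (strata_tuple ?Cs2) \<inter> dom ?M = {}"
    using split(2)[OF last_in_set[OF ne(1)]] by (auto simp: stratum_below_def)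
  moreover have "set (strata_tuple ?Cs2) \<subseteq> set (strata_tuple Cs)"
    by (metis append_take_drop_id concat_append map_append set_append Un_upper2)
  then have "set (strata_tuple ?Cs2) \<subseteq> dom (top_model Cs)"
    using striation_tuple_top[OF st] by blast
  moreover have "length (strata_tuple ?Cs1) = length (concat (take i Bs))"
    and "length (strata_tuple ?Cs2) = length (concat (drop i Bs))"
    using list_all2_takeI[OF lengths] list_all2_dropI[OF lengths] by (simp_all only: length_strata_tuple)
  moreover have "satt (top_model Cs) \<theta> (concat (take i Bs) @ concat (drop i Bs))
      (strata_tuple ?Cs1 @ strata_tuple ?Cs2)"
    using sat by (simp flip: concat_append map_append)
  moreover have "complete_formula L T (concat (take i Bs) @ concat (drop i Bs)) \<theta>"
    using assms(2) by (simp flip: concat_append)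
  ultimately show "extendible L T \<theta> (concat (take i Bs)) (concat (drop i Bs))"
    unfolding extendible_def using M striation_tuple_top[OF split(1)] striation_atomic_top[OF st]
    by blast
qed

lemma complete_formula_prefix_same_type:
  fixes M N :: "(nat,'f,'r) strc"
  assumes "complete_formula L T (u @ x) \<theta>" "models L T M" "models L T N"
    and "satt M \<theta> (u @ x) (a1 @ a2)" "satt N \<theta> (u @ x) (b1 @ b2)"
    and "length a1 = length u" "length b1 = length u"
  shows "same_type L u M a1 N b1"
proof (rule same_type_append)
  show "same_type L (u @ x) M (a1 @ a2) N (b1 @ b2)"
    by (rule complete_formula_same_type[OF assms(1-5)])
  show "distinct (u @ x)"
    by (rule complete_formula_distinct[OF assms(1)])
qed (use assms models_dom_ne in \<open>auto simp: satt_iff_matches\<close>)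

lemma complete_formula_prefix_iso:
  fixes M N N' :: "(nat,'f,'r) strc"
  assumes "complete_formula L T (u @ x) \<theta>"
    and "atomic_model L T M" "satt M \<theta> (u @ x) (a @ a')" "length a = length u"
    and "models L T N" "satt N \<theta> (u @ x) (b @ b')" "length b = length u"
    and "atomic_model L T N'" "elem_sub L N' N" "set b \<subseteq> dom N'"
  obtains g where "iso_on L g M N'" "map g a = b"
proof -
  have du: "distinct u"
    using complete_formula_distinct[OF assms(1)] by simp
  have "same_type L u M a N b"
    using complete_formula_prefix_same_type[OF assms(1) atomic_model_models[OF assms(2)] assms(5,3,6,4,7)] .
  moreover have "same_type L u N' b N b"
    by (rule elem_sub_same_type[OF assms(9) du assms(7,10)])
  ultimately have "same_type L u M a N' b"
    using same_type_trans same_type_sym by blast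
  moreover have "set a \<subseteq> dom M"
    using assms(3) by (auto simp: satt_iff_matches)
  ultimately show ?thesis
    using atomic_models_iso[OF assms(2,8) du assms(4,7) _ assms(10)] that by blast
qed

abbreviation glue :: "('a \<Rightarrow> 'b) \<Rightarrow> (('a,'f,'r) strc \<times> 'a list) list \<Rightarrow> (('b,'f,'r) strc \<times> 'b list) list
    \<Rightarrow> (('b,'f,'r) strc \<times> 'b list) list" where
  "glue g Cs Ds \<equiv> map (map_prod (strc_image g) (map g)) Cs @ Ds"

text \<open>Transport \<open>Cs\<close> along an isomorphism of its top model onto the bottom model of \<open>D # Ds\<close>,
  which is then replaced by that copy.\<close>
lemma striation_glue:
  assumes "striation L T Cs" "striation L T (D # Ds)" "iso_on L g (top_model Cs) (fst D)"
    and "\<forall>\<phi>\<in>T. wf_fm L \<phi>"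
  shows "striation L T (glue g Cs Ds)"
    and "elem_sub L (strc_image g (top_model Cs)) (top_model (glue g Cs Ds))"
    and "elem_sub L (top_model (D # Ds)) (top_model (glue g Cs Ds))"
proof -
  have ne: "Cs \<noteq> []"
    using assms(1) by (simp add: striation_def)
  have inj: "inj_on g (dom (top_model Cs))"
    using assms(3) by (simp add: iso_on_def)
  have img: "striation L T (map (map_prod (strc_image g) (map g)) Cs)"
    by (rule striation_image[OF assms(1) inj assms(4)])
  have top_img: "top_model (map (map_prod (strc_image g) (map g)) Cs) = strc_image g (top_model Cs)"
    using ne by (simp add: last_map)
  have equiv: "elem_sub L (strc_image g (top_model Cs)) (fst D)" "elem_sub L (fst D) (strc_image g (top_model Cs))"
    using strc_image_elem_sub[OF assms(3)] by blast+
  show glued: "striation L T (glue g Cs Ds)"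
    using striation_append[OF img assms(2)] top_img equiv(1) by simp
  show "elem_sub L (strc_image g (top_model Cs)) (top_model (glue g Cs Ds))"
    using striation_elem_sub_top[OF glued, of "map_prod (strc_image g) (map g) (last Cs)"] ne by simp
  show "elem_sub L (top_model (D # Ds)) (top_model (glue g Cs Ds))"
  proof (cases "Ds = []")
    case True
    then show ?thesis
      using equiv(2) top_img by simp
  next
    case False
    then show ?thesis
      using striation_elem_sub_top[OF glued, of "last Ds"] by simp
  qed
qed

lemma striation_glue_satt:
  assumes "striation L T Cs" "striation L T (D # Ds)" "iso_on L g (top_model Cs) (fst D)"
    and "\<forall>\<phi>\<in>T. wf_fm L \<phi>" "satt (top_model Cs) \<phi> w a" "fm_in L w \<phi>" "distinct w"
  shows "satt (top_model (glue g Cs Ds)) \<phi> w (map g a)"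
proof -
  have "iso_on L g (top_model Cs) (strc_image g (top_model Cs))"
    using iso_on_strc_image assms(3) by (metis iso_on_def)
  then have "satt (strc_image g (top_model Cs)) \<phi> w (map g a)"
    using iso_satt assms(5,6) by (metis fm_in_def satt_iff_matches)
  then show ?thesis
    by (rule elem_sub_satt[OF striation_glue(2)[OF assms(1-4)] assms(6,7)])
qed

text \<open>Via the part of the tuple up to \<open>v\<close>, the top model is isomorphic to the lower model of a
  witness of extendibility; the transported striation is then capped by the upper model.\<close>
lemma striation_realizes_refine_last:
  fixes Cs :: "((nat,'f,'r) strc \<times> nat list) list"
  assumes "striation_realizes L T Cs \<theta> (Ps @ [v @ x])" "extendible L T \<theta> (concat Ps @ v) x"
    and "\<forall>\<phi>\<in>T. wf_fm L \<phi>"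
  obtains Cs' :: "((nat,'f,'r) strc \<times> nat list) list" where "striation_realizes L T Cs' \<theta> (Ps @ [v, x])"
proof -
  obtain Cs0 Top t where Cs: "Cs = Cs0 @ [(Top, t)]"
    and lengths: "fits_blocks Cs0 Ps" "length t = length v + length x"
    using assms(1) by (auto simp: striation_realizes_def list_all2_append2 list_all2_Cons2)
  define t1 t2 where "t1 = take (length v) t" and "t2 = drop (length v) t"
  let ?u = "concat Ps @ v" and ?a = "strata_tuple Cs0 @ t1"
  have st: "striation L T Cs" and la: "length ?a = length ?u"
    using assms(1) lengths length_strata_tuple[OF lengths(1)] by (auto simp: striation_realizes_def t1_def)
  have top: "atomic_model L T Top" "satt Top \<theta> (?u @ x) (?a @ t2)"
    using assms(1) striation_atomic_top[OF st] by (auto simp: striation_realizes_def Cs t1_def t2_def)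
  obtain M N :: "(nat,'f,'r) strc" and bs as where ext: "complete_formula L T (?u @ x) \<theta>"
    "atomic_model L T M" "atomic_model L T N" "elem_sub L M N" "length bs = length ?u"
    "set bs \<subseteq> dom M" "set as \<subseteq> dom N - dom M" "satt N \<theta> (?u @ x) (bs @ as)"
    using assms(2) unfolding extendible_def by blast
  obtain g where g: "iso_on L g Top M" "map g ?a = bs"
    using complete_formula_prefix_iso[OF ext(1) top la atomic_model_models[OF ext(3)] ext(8,5,2,4,6)] .
  have "striation L T (Cs0 @ [(Top, t1)])"
    using striation_shrink_last st set_take_subset unfolding Cs t1_def by metis
  moreover have "striation L T [(M, []), (N, as)]"
    by (rule striation_pair[OF ext(2,3,4,7)])
  ultimately have "striation L T (glue g (Cs0 @ [(Top, t1)]) [(N, as)])"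
    using striation_glue(1) g(1) assms(3) by fastforce
  moreover have "fits_blocks (glue g (Cs0 @ [(Top, t1)]) [(N, as)]) (Ps @ [v, x])"
    using lengths ext(5,8) by (auto simp: list_all2_append list_all2_map1 t1_def satt_iff_matches
        list_all2_lengthD intro: list_all2_mono)
  moreover have "satt (top_model (glue g (Cs0 @ [(Top, t1)]) [(N, as)])) \<theta> (concat (Ps @ [v, x]))
      (strata_tuple (glue g (Cs0 @ [(Top, t1)]) [(N, as)]))"
    using ext(8) g(2) by (simp add: map_concat flip: append_assoc)
  ultimately have "striation_realizes L T (glue g (Cs0 @ [(Top, t1)]) [(N, as)]) \<theta> (Ps @ [v, x])"
    unfolding striation_realizes_def by (intro conjI)
  then show ?thesis
    by (rule that)
qed

lemma striation_realizes_if_striated: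
  assumes "striated L T \<theta> Bs" "Bs \<noteq> []" "\<forall>\<phi>\<in>T. wf_fm L \<phi>"
  obtains Cs :: "((nat,'f,'r) strc \<times> nat list) list" where "striation_realizes L T Cs \<theta> Bs"
proof -
  have "\<exists>Cs :: ((nat,'f,'r) strc \<times> nat list) list.
      striation_realizes L T Cs \<theta> (take k Bs @ [concat (drop k Bs)])" if "k < length Bs" for k
    using that
  proof (induct k)
    case 0
    obtain M :: "(nat,'f,'r) strc" and as where "atomic_model L T M" "satt M \<theta> (concat Bs) as"
      using complete_formula_realized assms(1) by (metis striated_def)
    then have "striation_realizes L T [(M, as)] \<theta> [concat Bs]"
      by (auto simp: striation_realizes_def striation_def satt_iff_matches)
    then show ?case
      by auto
  next
    case (Suc k)
    then obtain Cs :: "((nat,'f,'r) strc \<times> nat list) list"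
      where "striation_realizes L T Cs \<theta> (take k Bs @ [Bs ! k @ concat (drop (Suc k) Bs)])"
      by (metis Cons_nth_drop_Suc Suc_lessD concat.simps(2))
    moreover have "extendible L T \<theta> (concat (take (Suc k) Bs)) (concat (drop (Suc k) Bs))"
      using assms(1) Suc(2) unfolding striated_def by blast
    then have "extendible L T \<theta> (concat (take k Bs) @ Bs ! k) (concat (drop (Suc k) Bs))"
      using Suc(2) by (simp add: take_Suc_conv_app_nth)
    ultimately obtain Cs' :: "((nat,'f,'r) strc \<times> nat list) list"
      where "striation_realizes L T Cs' \<theta> (take k Bs @ [Bs ! k, concat (drop (Suc k) Bs)])"
      using striation_realizes_refine_last assms(3) by blast
    then show ?case
      using Suc(2) by (auto simp: take_Suc_conv_app_nth)
  qed
  moreover have "take (length Bs - 1) Bs @ [concat (drop (length Bs - 1) Bs)] = Bs"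
    using assms(2) by (induct Bs rule: rev_induct) auto
  ultimately show ?thesis
    using that assms(2) by (metis diff_less length_greater_0_conv zero_less_one)
qed

lemma striation_realizes_Cons2:
  assumes "striation_realizes L T Cs \<theta> (z # xs)"
  obtains M0 t0 Cs1 where "Cs = (M0, t0) # Cs1" "length t0 = length z"
    "fits_blocks Cs1 xs"
  using assms by (auto simp: striation_realizes_def list_all2_Cons2)

section \<open>Amalgamation\<close>

text \<open>As \<open>\<alpha>\<restriction>\<^sub>z\<close> and \<open>\<beta>\<restriction>\<^sub>z\<close> are equivalent, the bottom tuple of the realization of \<open>\<alpha>\<close>
  extends in its top model to a realization of \<open>\<beta>\<close>; completeness of \<open>\<beta>\<close> then fixes its type.\<close>
lemma striation_realizes_base_iso:
  fixes Cs Ds :: "((nat,'f,'r) strc \<times> nat list) list"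
  assumes "striation_realizes L T Cs \<alpha> (z # xs)" "striation_realizes L T ((N0, u0) # Ds) \<beta> (z # ys)"
    and "complete_formula L T (z @ concat ys) \<beta>" "entails L T (Iff (Exs (concat xs) \<alpha>) (Exs (concat ys) \<beta>))"
    and "distinct (z @ concat xs)"
  obtains g where "iso_on L g (top_model Cs) N0" "map g (snd (hd Cs)) = u0"
proof -
  obtain M0 t0 Cs1 where Cs: "Cs = (M0, t0) # Cs1" "length t0 = length z"
    "fits_blocks Cs1 xs"
    using assms(1) by (rule striation_realizes_Cons2)
  let ?Mt = "top_model Cs" and ?Nt = "top_model ((N0, u0) # Ds)"
  have stC: "striation L T Cs" and stD: "striation L T ((N0, u0) # Ds)"
    using assms(1,2) by (simp_all add: striation_realizes_def)
  have dy: "distinct (z @ concat ys)"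
    by (rule complete_formula_distinct[OF assms(3)])
  have Mt: "atomic_model L T ?Mt" and Nt: "models L T ?Nt"
    using striation_atomic_top[OF stC] striation_atomic_top[OF stD] by (simp_all add: atomic_model_models)
  have "satt ?Mt \<alpha> (z @ concat xs) (t0 @ strata_tuple Cs1)"
    using assms(1) Cs(1) by (simp add: striation_realizes_def)
  then have "satt ?Mt (Exs (concat xs) \<alpha>) z t0"
    by (rule satt_ExsI[OF _ assms(5) length_strata_tuple[OF Cs(3)] Cs(2)])
  then have "satt ?Mt (Exs (concat ys) \<beta>) z t0"
    using entails_satt[OF entails_Iff_Imp[OF assms(4)] atomic_model_models[OF Mt]] by simp
  then obtain ds where "satt ?Mt \<beta> (z @ concat ys) (t0 @ ds)"
    using satt_ExsD[OF _ dy models_dom_ne[OF atomic_model_models[OF Mt]]] complete_formula_fm_in[OF assms(3)]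
    by (metis fm_in_def)
  moreover have "satt ?Nt \<beta> (z @ concat ys) (u0 @ strata_tuple Ds)" "length u0 = length z"
    using assms(2) by (auto simp: striation_realizes_def)
  moreover have "atomic_model L T N0" "elem_sub L N0 ?Nt" "set u0 \<subseteq> dom N0"
    using stD striation_elem_sub_top[OF stD, of "(N0, u0)"] by (auto simp: striation_def)
  ultimately obtain g where "iso_on L g ?Mt N0" "map g t0 = u0"
    using complete_formula_prefix_iso[OF assms(3) Mt _ Cs(2) Nt] by metis
  then show ?thesis
    using that Cs(1) by simp
qed

lemma striated_isolating_formula:
  fixes Cs :: "((nat,'f,'r) strc \<times> nat list) list"
  assumes "striation_realizes L T Cs \<phi> Bs" "distinct (concat Bs)" "fm_in L (concat Bs) \<phi>"
  obtains \<psi> where "striated L T \<psi> Bs" "entails L T (Imp \<psi> \<phi>)"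
proof -
  have st: "striation L T Cs" and lengths: "fits_blocks Cs Bs"
    and sat: "satt (top_model Cs) \<phi> (concat Bs) (strata_tuple Cs)"
    using assms(1) unfolding striation_realizes_def by blast+
  obtain \<psi> where "complete_formula L T (concat Bs) \<psi>" "satt (top_model Cs) \<psi> (concat Bs) (strata_tuple Cs)"
    "entails L T (Imp \<psi> \<phi>)"
    using atomic_model_isolating_formula[OF striation_atomic_top[OF st] assms(2)
        length_strata_tuple[OF lengths] striation_tuple_top[OF st]] sat assms(3) by metis
  then show ?thesis
    using striated_if_striation_realizes[of L T Cs \<psi> Bs] st lengths that
    by (simp add: striation_realizes_def)
qed

lemma striation_realizes_amalgamate:
  assumes "striation_realizes L T Cs \<alpha> (z # xs)" "striation_realizes L T ((N0, u0) # Ds) \<beta> (z # ys)"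
    and "iso_on L g (top_model Cs) N0" "map g (snd (hd Cs)) = u0"
    and "distinct (z @ concat xs @ concat ys)" "fm_in L (z @ concat xs) \<alpha>" "fm_in L (z @ concat ys) \<beta>"
    and "\<forall>\<phi>\<in>T. wf_fm L \<phi>"
  shows "striation_realizes L T (glue g Cs Ds) (Conj \<alpha> \<beta>) (z # xs @ ys)"
proof -
  obtain M0 t0 Cs1 where Cs: "Cs = (M0, t0) # Cs1" "length t0 = length z"
    "fits_blocks Cs1 xs"
    using assms(1) by (rule striation_realizes_Cons2)
  have stC: "striation L T Cs" and stD: "striation L T ((N0, u0) # Ds)"
    and lD: "fits_blocks Ds ys"
    using assms(1,2) by (simp_all add: striation_realizes_def)
  have dx: "distinct (z @ concat xs)" and dy: "distinct (z @ concat ys)"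
    using assms(5) by auto
  have iso: "iso_on L g (top_model Cs) (fst (N0, u0))"
    using assms(3) by simp
  note glue = striation_glue[OF stC stD iso assms(8)]
  let ?E = "top_model (glue g Cs Ds)"
  let ?a = "u0 @ map g (strata_tuple Cs1)" and ?b = "strata_tuple Ds"
  have tuple: "strata_tuple (glue g Cs Ds) = ?a @ ?b"
    using Cs(1) assms(4) by (simp add: map_concat)
  have sE: "set (?a @ ?b) \<subseteq> dom ?E"
    using striation_tuple_top[OF glue(1)] unfolding tuple .
  have lu0: "length u0 = length z" and lx: "length (map g (strata_tuple Cs1)) = length (concat xs)"
    and lb: "length ?b = length (concat ys)"
    using Cs length_strata_tuple[OF Cs(3)] length_strata_tuple[OF lD] assms(4) by auto
  have "satt (top_model Cs) \<alpha> (z @ concat xs) (t0 @ strata_tuple Cs1)"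
    using assms(1) Cs(1) by (simp add: striation_realizes_def)
  then have "satt ?E \<alpha> (z @ concat xs) (map g (t0 @ strata_tuple Cs1))"
    by (rule striation_glue_satt[OF stC stD iso assms(8) _ assms(6) dx])
  moreover have "map g (t0 @ strata_tuple Cs1) = ?a"
    using assms(4) Cs(1) by simp
  ultimately have "satt ?E \<alpha> (z @ concat xs) ?a"
    by simp
  then have "satt ?E \<alpha> (z @ concat xs @ concat ys) (?a @ ?b)"
    by (rule satt_if_matches_imp)
      (use lu0 lx lb sE in \<open>auto intro: matches_append_left\<close>)
  moreover have "satt (top_model ((N0, u0) # Ds)) \<beta> (z @ concat ys) (u0 @ ?b)"
    using assms(2) by (simp add: striation_realizes_def)
  then have "satt ?E \<beta> (z @ concat ys) (u0 @ ?b)"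
    by (rule elem_sub_satt[OF glue(3) assms(7) dy])
  then have "satt ?E \<beta> (z @ concat xs @ concat ys) (?a @ ?b)"
    by (rule satt_if_matches_imp)
      (use lu0 lx lb sE in \<open>auto intro: matches_skip_middle[OF lu0[symmetric] lx[symmetric]]\<close>)
  moreover have "fits_blocks (glue g Cs Ds) (z # xs @ ys)"
    using Cs lD by (auto intro!: list_all2_appendI simp: list_all2_map1 elim!: list_all2_mono)
  ultimately show ?thesis
    using glue(1) tuple by (simp add: striation_realizes_def satt_Conj)
qed

theorem lemma3p2p5:
  fixes L :: "('f::countable, 'r::countable) lang"
    and T :: "('f,'r) fm set"
    and U :: "('a,'f,'r) strc"
    and z :: "nat list" and xs ys :: "nat list list"
    and \<alpha> \<beta> :: "('f,'r) fm"
  assumes "complete_theory L T"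
    and "atomic_model L T U" and "\<not> countable (dom U)"
    and "striated L T \<alpha> (z # xs)"
    and "striated L T \<beta> (z # ys)"
    and "distinct (z @ concat xs @ concat ys)"
    and "entails L T (Iff (Exs (concat xs) \<alpha>) (Exs (concat ys) \<beta>))"
  shows "\<exists>\<psi>. striated L T \<psi> (z # xs @ ys) \<and> entails L T (Imp \<psi> (Conj \<alpha> \<beta>))"
proof -
  have wf_T: "\<forall>\<phi>\<in>T. wf_fm L \<phi>"
    using assms(1) by (auto simp: complete_theory_def sentence_def)
  have \<alpha>: "complete_formula L T (z @ concat xs) \<alpha>" and \<beta>: "complete_formula L T (z @ concat ys) \<beta>"
    using assms(4,5) by (simp_all add: striated_def)
  obtain Cs :: "((nat,'f,'r) strc \<times> nat list) list" where Cs: "striation_realizes L T Cs \<alpha> (z # xs)"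
    using striation_realizes_if_striated[OF assms(4) _ wf_T] by blast
  obtain Ds' :: "((nat,'f,'r) strc \<times> nat list) list" where Ds': "striation_realizes L T Ds' \<beta> (z # ys)"
    using striation_realizes_if_striated[OF assms(5) _ wf_T] by blast
  then obtain N0 u0 Ds where "Ds' = (N0, u0) # Ds"
    by (rule striation_realizes_Cons2)
  with Ds' have Ds: "striation_realizes L T ((N0, u0) # Ds) \<beta> (z # ys)"
    by simp
  obtain g where "iso_on L g (top_model Cs) N0" "map g (snd (hd Cs)) = u0"
    by (rule striation_realizes_base_iso[OF Cs Ds \<beta> assms(7) complete_formula_distinct[OF \<alpha>]])
  then have "striation_realizes L T (glue g Cs Ds) (Conj \<alpha> \<beta>) (z # xs @ ys)"
    by (rule striation_realizes_amalgamate[OF Cs Ds _ _ assms(6) complete_formula_fm_in[OF \<alpha>]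
          complete_formula_fm_in[OF \<beta>] wf_T])
  moreover have "distinct (concat (z # xs @ ys))" "fm_in L (concat (z # xs @ ys)) (Conj \<alpha> \<beta>)"
    using assms(6) complete_formula_fm_in[OF \<alpha>] complete_formula_fm_in[OF \<beta>] by (auto simp: fm_in_def)
  ultimately show ?thesis
    by (metis striated_isolating_formula)
qed

end
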